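(* Let $0<s,t<1$ and $w\in\mathbb{C}$ with $\mathrm{Re}\,w>-\tfrac12$. Let $k_w=K_w/\|K_w\|_{\mathcal{N}}$ be the normalized reproducing kernel of the Newton space $\mathcal{N}$ at $w$, regarded as an element of $H^2(\mu)$. Then $$\langle T_{t^z}^*T_{s^z}k_w,k_w\rangle_{H^2(\mu)}=\frac{s^w t^{\overline{w}}}{(s+t-st)^{2\,\mathrm{Re}\,w+1}}.$$
   Context: Let $\Omega=\{z\in\mathbb{C}:\mathrm{Re}\,z\ge-\tfrac12\}$ and let $\mu$ be the probability measure on $\Omega$ supported on the vertical lines $\mathrm{Re}\,z=\tfrac n2$, $n=-1,0,1,2,\dots$, given by $d\mu=\sum_{n=-1}^\infty \frac{|\Gamma(\frac n2+iy+1)|^2}{2\pi (n+1)!}\,dy\,d\delta_{n/2}(x)$ (where $z=x+iy$ and $\delta_{n/2}$ is the unit point mass at $x=n/2$). For $0<a\le1$, $a^z=e^{z\ln a}$. $H^2(\mu)$ is the closed linear span of $\{a^z:0<a\le1\}$ in $L^2(\mu)$, $P_\mu$ the orthogonal projection of $L^2(\mu)$ onto $H^2(\mu)$, and for $f\in L^\infty(\mu)$, $T_f h=P_\mu(fh)$ on $H^2(\mu)$; for $0<s<1$, $T_{s^z}$ is just multiplication by $s^z$ restricted to $H^2(\mu)$. The Newton space $\mathcal{N}$ is the Hilbert space of analytic functions on $\{\mathrm{Re}\,z>-\tfrac12\}$ having the Newton polynomials $N_0=1$, $N_n(z)=(-1)^n z(z-1)\cdots(z-n+1)/n!$ as orthonormal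 basis; its reproducing kernel is $K_w(z)=\frac{\Gamma(z+\overline w+1)}{\Gamma(z+1)\Gamma(\overline w+1)}$. Each $f\in\mathcal{N}$ has nontangential boundary values a.e. on $\mathrm{Re}\,z=-\tfrac12$, and with these values $\mathcal{N}$ embeds isometrically in $L^2(\mu)$ with image exactly $H^2(\mu)$ (with $a^z\mapsto a^z$). *)

theory Defs
  imports "HOL-Analysis.Analysis"
begin

definition rpow :: "real \<Rightarrow> complex \<Rightarrow> complex" where
  "rpow a z = exp (z * of_real (ln a))"

definition newton_poly :: "nat \<Rightarrow> complex \<Rightarrow> complex" where
  "newton_poly n z = (-1) ^ n * (\<Prod>j<n. z - of_nat j) / of_nat (fact n)"

text \<open>Reproducing kernel of the Newton space (defined by the Gamma formula,
  which also gives its continuous boundary values on Re z = -1/2).\<close>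
definition newton_kernel :: "complex \<Rightarrow> complex \<Rightarrow> complex" where
  "newton_kernel w z = Gamma (z + cnj w + 1) / (Gamma (z + 1) * Gamma (cnj w + 1))"

text \<open>Norm of K_w in the Newton space: K_w = sum_n conj(N_n(w)) N_n and the N_n are
  orthonormal, so ||K_w||^2 = sum_n |N_n(w)|^2.\<close>
definition newton_kernel_norm :: "complex \<Rightarrow> real" where
  "newton_kernel_norm w = sqrt (\<Sum>n. (cmod (newton_poly n w))\<^sup>2)"

definition newton_kernel_normalized :: "complex \<Rightarrow> complex \<Rightarrow> complex" where
  "newton_kernel_normalized w z = newton_kernel w z / of_real (newton_kernel_norm w)"

text \<open>The measure mu: index m = n + 1 (m :: nat, n = m - 1 \<ge> -1); on the line
  Re z = (m-1)/2 it has density |Gamma((m-1)/2 + iy + 1)|^2 / (2 pi m!) dy.\<close>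
definition newton_mu :: "complex measure" where
  "newton_mu = distr
     (density (count_space (UNIV :: nat set) \<Otimes>\<^sub>M (lborel :: real measure))
        (\<lambda>(m, y). ennreal ((cmod (Gamma (Complex ((real m - 1) / 2) y + 1)))\<^sup>2
                             / (2 * pi * fact m))))
     borel (\<lambda>(m, y). Complex ((real m - 1) / 2) y)"

definition L2_inner :: "complex measure \<Rightarrow> (complex \<Rightarrow> complex) \<Rightarrow> (complex \<Rightarrow> complex) \<Rightarrow> complex" where
  "L2_inner M f g = (\<integral> z. f z * cnj (g z) \<partial>M)"

text \<open>Toeplitz operator with symbol s^z (0<s<1): multiplication by s^z on H^2(mu).\<close>
definition T_pow :: "real \<Rightarrow> (complex \<Rightarrow> complex) \<Rightarrow> (complex \<Rightarrow> complex)" where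
  "T_pow s f = (\<lambda>z. rpow s z * f z)"

end

(*
  The measure mu lives on the lines Re z = (m - 1)/2, and on each line the weight |Gamma(z + 1)|^2
  cancels the denominator of K_w(z) = Gamma(z + conj w + 1) / (Gamma(z + 1) Gamma(conj w + 1)).
  The contribution of line m to <T_{s^z} k_w, T_{t^z} k_w> is therefore a Fourier integral of
  y |-> |Gamma(r + i y)|^2 with r = (m - 1)/2 + Re w + 1.  That Fourier transform is
  2 pi Gamma(2r) (2 cosh(x/2))^(-2r): the inverse of the Beta integral
  int e^(p v) (1 + e^v)^(-2r) dv = Gamma(p) Gamma(2r - p) / Gamma(2r), recovered by Gaussian
  regularisation.  Summing over m is a binomial series in s t / (s + t), and the normalisation
  ||K_w||^2 = sum_n |N_n(w)|^2 = Gamma(2 Re w + 1) / |Gamma(w + 1)|^2 is Gauss's summation of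
  2F1(-w, -conj w; 1; 1), obtained from the contiguous relation in the lower parameter c and
  the limit c -> infinity.
*)
theory Submission
  imports Defs "HOL-Probability.Probability"
begin

lemma has_bochner_integral_rewrite:
  "has_bochner_integral M f x \<Longrightarrow> (\<And>y. f y = g y) \<Longrightarrow> x = z \<Longrightarrow> has_bochner_integral M g z"
  by (metis has_bochner_integral_cong)

lemma Re_pos_not_nonpos_Ints: "Re z > 0 \<Longrightarrow> (z::complex) \<notin> \<int>\<^sub>\<le>\<^sub>0"
  by (auto elim!: nonpos_Ints_cases)

lemma pos_real_not_nonpos_Ints: "(x::real) > 0 \<Longrightarrow> x \<notin> \<int>\<^sub>\<le>\<^sub>0"
  by (auto elim!: nonpos_Ints_cases)

lemma Gamma_nonzero_Re_pos: "Re z > 0 \<Longrightarrow> Gamma (z::complex) \<noteq> 0"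
  by (intro Gamma_nonzero Re_pos_not_nonpos_Ints)

lemma one_plus_exp_pos[simp]: "0 < 1 + exp (x::real)" "1 + exp (x::real) \<noteq> 0"
  using add_pos_pos[OF zero_less_one exp_gt_zero[of x]] by auto

lemma has_bochner_integral_Gamma_exp:
  fixes p :: complex
  assumes "Re p > 0"
  shows "has_bochner_integral lborel (\<lambda>v::real. exp (p * of_real v) * of_real (exp (- exp v))) (Gamma p)"
proof -
  define f where "f = (\<lambda>t::real. complex_of_real t powr (p - 1) / of_real (exp t))"
  have fa: "f absolutely_integrable_on {0<..}"
    unfolding f_def by (rule absolutely_integrable_Gamma_integral'[OF assms])
  have fi: "integral {0<..} f = Gamma p"
    unfolding f_def using Gamma_integral_complex'[OF assms] by (rule integral_unique)
  have rng: "exp ` (UNIV::real set) = {0<..}"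
    using exp_total by (auto simp: image_iff)
  have "(\<lambda>x. \<bar>exp x\<bar> *\<^sub>R f (exp x)) absolutely_integrable_on UNIV \<and>
        integral UNIV (\<lambda>x. \<bar>exp x\<bar> *\<^sub>R f (exp x)) = Gamma p"
    by (subst has_absolute_integral_change_of_variables_real[where g=exp])
       (auto intro!: derivative_eq_intros simp: rng fa fi inj_on_def)
  moreover have eq: "(\<lambda>x. \<bar>exp x\<bar> *\<^sub>R f (exp x)) = (\<lambda>v::real. exp (p * of_real v) * of_real (exp (- exp v)))"
  proof
    fix x :: real
    have "complex_of_real (exp x) powr (p - 1) = exp ((p - 1) * of_real x)"
      by (simp add: powr_def exp_of_real[symmetric] Ln_exp mult.commute)
    then show "\<bar>exp x\<bar> *\<^sub>R f (exp x) = exp (p * of_real x) * of_real (exp (- exp x))"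
      unfolding f_def
      by (simp add: scaleR_conv_of_real exp_minus field_simps exp_diff exp_of_real)
  qed
  ultimately have A: "(\<lambda>v::real. exp (p * of_real v) * of_real (exp (- exp v))) absolutely_integrable_on UNIV"
     and B: "integral UNIV (\<lambda>v::real. exp (p * of_real v) * of_real (exp (- exp v))) = Gamma p"
    by auto
  have meas: "(\<lambda>v::real. exp (p * of_real v) * of_real (exp (- exp v))) \<in> borel_measurable lborel"
    by measurable
  from A have "integrable lebesgue (\<lambda>v::real. exp (p * of_real v) * of_real (exp (- exp v)))"
    by (simp add: set_integrable_def)
  then have I: "integrable lborel (\<lambda>v::real. exp (p * of_real v) * of_real (exp (- exp v)))"
    using integrable_completion[OF meas] by simp
  then show ?thesis
    using B integral_lborel[OF I] by (simp add: has_bochner_integral_iff)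
qed

lemma has_bochner_integral_Gamma_exp_shift:
  fixes p :: complex and c :: real
  assumes "Re p > 0"
  shows "has_bochner_integral lborel (\<lambda>v::real. exp (p * of_real v) * of_real (exp (- exp (c + v))))
           (Gamma p * exp (- p * of_real c))"
proof -
  have "has_bochner_integral lborel (\<lambda>v::real. exp (p * of_real (c + 1 * v)) * of_real (exp (- exp (c + 1 * v)))) (Gamma p /\<^sub>R \<bar>1\<bar>)"
    using has_bochner_integral_Gamma_exp[OF assms] by (subst (asm) lborel_has_bochner_integral_real_affine_iff[where c=1 and t=c]) auto
  then have X: "has_bochner_integral lborel (\<lambda>v::real. exp (p * of_real (c + 1 * v)) * of_real (exp (- exp (c + 1 * v)))) (Gamma p)"
    by simp
  have "has_bochner_integral lborel (\<lambda>v::real. exp (- p * of_real c) * (exp (p * of_real (c + 1 * v)) * of_real (exp (- exp (c + 1 * v))))) (exp (- p * of_real c) * Gamma p)"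
    by (rule has_bochner_integral_mult_right) (rule X)
  then show ?thesis
    by (rule has_bochner_integral_cong[THEN iffD1, rotated -1])
       (auto simp: exp_add[symmetric] algebra_simps)
qed

lemma has_bochner_integral_Gamma_exp_shift_real:
  fixes a c :: real
  assumes "a > 0"
  shows "has_bochner_integral lborel (\<lambda>v::real. exp (a * v) * exp (- exp (c + v))) (Gamma a * exp (- a * c))"
proof -
  have "has_bochner_integral lborel (\<lambda>v::real. Re (exp (complex_of_real a * of_real v) * of_real (exp (- exp (c + v)))))
           (Re (Gamma (complex_of_real a) * exp (- complex_of_real a * of_real c)))"
    by (rule has_bochner_integral_Re[OF has_bochner_integral_Gamma_exp_shift]) (use assms in simp)
  then show ?thesis
    by (simp add: Gamma_complex_of_real exp_of_real flip: of_real_mult of_real_minus)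
qed

lemma lborel_Fubini_has_bochner_integral_iff:
  fixes F :: "real \<Rightarrow> real \<Rightarrow> 'a::{banach, second_countable_topology}"
  assumes [measurable]: "case_prod F \<in> borel_measurable (lborel \<Otimes>\<^sub>M lborel)"
    and A: "\<And>u. has_bochner_integral lborel (F u) (A u)"
    and B: "\<And>u. has_bochner_integral lborel (\<lambda>v. norm (F u v)) (B u)"
    and "integrable lborel B"
    and C: "\<And>v. has_bochner_integral lborel (\<lambda>u. F u v) (C v)"
  shows "has_bochner_integral lborel A I \<longleftrightarrow> has_bochner_integral lborel C I"
proof -
  have IA: "(\<lambda>u. \<integral>v. F u v \<partial>lborel) = A" and IB: "(\<lambda>u. \<integral>v. norm (F u v) \<partial>lborel) = B"
    and IC: "(\<lambda>v. \<integral>u. F u v \<partial>lborel) = C"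
    using A B C by (auto simp: fun_eq_iff has_bochner_integral_integral_eq)
  have F: "integrable (lborel \<Otimes>\<^sub>M lborel) (case_prod F)"
    using A \<open>integrable lborel B\<close>
    by (intro lborel_pair.Fubini_integrable) (auto simp: IB intro: integrable.intros)
  have "integrable lborel A" "integrable lborel C"
    using lborel_pair.integrable_fst[OF F] lborel_pair.integrable_snd[OF F] by (simp_all add: IA IC)
  moreover have "integral\<^sup>L lborel C = integral\<^sup>L lborel A"
    using lborel_pair.Fubini_integral[OF F] by (simp add: IA IC)
  ultimately show ?thesis by (auto simp: has_bochner_integral_iff)
qed

lemma has_bochner_integral_logistic_beta:
  fixes r y :: real
  assumes r: "r > 0"
  defines "p \<equiv> Complex r y"
  shows "has_bochner_integral lborel (\<lambda>v::real. exp (p * of_real v) * of_real ((1 + exp v) powr (- 2 * r)))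
           (Gamma p * Gamma (2 * of_real r - p) / Gamma (2 * of_real r))"
proof -
  define F where "F = (\<lambda>u v::real. exp (p * of_real v) * of_real (exp (2 * r * u) * exp (- exp u) * exp (- exp (u + v))))"
  have Rep: "Re p = r" by (simp add: p_def)
  have Rep2: "Re (2 * of_real r - p) > 0" using r by (simp add: p_def)
  have G2: "Gamma (2 * complex_of_real r) = of_real (Gamma (2 * r))"
    by (metis Gamma_complex_of_real of_real_mult of_real_numeral)
  have G2_nz: "Gamma (2 * complex_of_real r) \<noteq> 0"
    using r by (intro Gamma_nonzero_Re_pos) simp
  have "has_bochner_integral lborel
      (\<lambda>v. of_real (Gamma (2 * r)) * (exp (p * of_real v) * of_real ((1 + exp v) powr (- 2 * r))))
      (Gamma p * Gamma (2 * of_real r - p))"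
  proof (rule lborel_Fubini_has_bochner_integral_iff[where F = F, THEN iffD1])
    show "case_prod F \<in> borel_measurable (lborel \<Otimes>\<^sub>M lborel)"
      unfolding F_def by measurable
    show "has_bochner_integral lborel (F u) (Gamma p * (exp ((2 * of_real r - p) * of_real u) * of_real (exp (- exp u))))" for u
    proof -
      have "has_bochner_integral lborel
          (\<lambda>v. of_real (exp (2 * r * u) * exp (- exp u)) * (exp (p * of_real v) * of_real (exp (- exp (u + v)))))
          (of_real (exp (2 * r * u) * exp (- exp u)) * (Gamma p * exp (- p * of_real u)))"
        by (intro has_bochner_integral_mult_right has_bochner_integral_Gamma_exp_shift) (simp add: Rep r)
      moreover have "complex_of_real (exp (2 * r * u)) * exp (- p * of_real u) = exp ((2 * of_real r - p) * of_real u)"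
        by (simp add: exp_of_real[symmetric] exp_add[symmetric] algebra_simps)
      ultimately show ?thesis
        by (elim has_bochner_integral_rewrite) (simp_all add: F_def mult_ac)
    qed
    show "has_bochner_integral lborel (\<lambda>v. norm (F u v)) (exp (2 * r * u) * exp (- exp u) * (Gamma r * exp (- r * u)))" for u
    proof -
      have "norm (F u v) = exp (2 * r * u) * exp (- exp u) * (exp (r * v) * exp (- exp (u + v)))" for v
        by (simp add: F_def norm_mult Rep)
      then show ?thesis
        by (simp only:) (intro has_bochner_integral_mult_right has_bochner_integral_Gamma_exp_shift_real r)
    qed
    have "has_bochner_integral lborel (\<lambda>u. Gamma r * (exp (r * u) * exp (- exp (0 + u)))) (Gamma r * (Gamma r * exp (- r * 0)))"
      by (intro has_bochner_integral_mult_right has_bochner_integral_Gamma_exp_shift_real r)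
    then show "integrable lborel (\<lambda>u. exp (2 * r * u) * exp (- exp u) * (Gamma r * exp (- r * u)))"
      by (elim has_bochner_integral_rewrite[THEN integrable.intros]) (simp_all add: mult_exp_exp algebra_simps)
    show "has_bochner_integral lborel (\<lambda>u. F u v) (of_real (Gamma (2 * r)) * (exp (p * of_real v) * of_real ((1 + exp v) powr (- 2 * r))))" for v
    proof -
      define c where "c = ln (1 + exp v)"
      have c: "exp c = 1 + exp v" unfolding c_def by (simp add: add_pos_pos)
      have "has_bochner_integral lborel (\<lambda>u. exp (p * of_real v) * of_real (exp (2 * r * u) * exp (- exp (c + u))))
          (exp (p * of_real v) * of_real (Gamma (2 * r) * exp (- (2 * r) * c)))"
        by (intro has_bochner_integral_mult_right has_bochner_integral_of_real
            has_bochner_integral_Gamma_exp_shift_real) (simp add: r)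
      moreover have "exp (- exp (c + u)) = exp (- exp u) * exp (- exp (u + v))" for u
      proof -
        have "exp (c + u) = exp u + exp (u + v)" by (simp add: exp_add c algebra_simps)
        then show ?thesis by (simp add: mult_exp_exp)
      qed
      moreover have "exp (- (2 * r) * c) = (1 + exp v) powr (- 2 * r)"
        by (simp add: powr_def c_def add_pos_pos)
      ultimately show ?thesis
        by (elim has_bochner_integral_rewrite) (simp_all add: F_def mult_ac)
    qed
    show "has_bochner_integral lborel (\<lambda>u. Gamma p * (exp ((2 * of_real r - p) * of_real u) * of_real (exp (- exp u))))
        (Gamma p * Gamma (2 * of_real r - p))"
      by (intro has_bochner_integral_mult_right has_bochner_integral_Gamma_exp Rep2)
  qed
  then have "has_bochner_integral lborel
      (\<lambda>v. of_real (Gamma (2 * r)) * (exp (p * of_real v) * of_real ((1 + exp v) powr (- 2 * r))) / of_real (Gamma (2 * r)))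
      (Gamma p * Gamma (2 * of_real r - p) / of_real (Gamma (2 * r)))"
    by (rule has_bochner_integral_divide)
  then show ?thesis
    using G2_nz unfolding G2 by (elim has_bochner_integral_rewrite) simp_all
qed

definition logistic_power :: "real \<Rightarrow> real \<Rightarrow> real" where
  "logistic_power r v = exp (r * v) * (1 + exp v) powr (- 2 * r)"

lemma logistic_power_pos: "0 < logistic_power r v"
  unfolding logistic_power_def by (simp add: add_pos_pos)

lemma logistic_power_le_1:
  assumes "r > 0" shows "logistic_power r v \<le> 1"
proof -
  have p: "0 < 1 + exp v" by (simp add: add_pos_pos)
  have "exp (r * v) = exp v powr r" by (simp add: powr_def mult.commute)
  also have "\<dots> \<le> (1 + exp v) powr r" using assms by (intro powr_mono2) auto
  also have "\<dots> \<le> (1 + exp v) powr (2 * r)" using assms by (intro powr_mono) auto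
  finally have "logistic_power r v \<le> (1 + exp v) powr (2 * r) * (1 + exp v) powr (- 2 * r)"
    unfolding logistic_power_def by (intro mult_right_mono) auto
  also have "\<dots> = 1" using p by (simp add: powr_add[symmetric])
  finally show ?thesis .
qed

lemma isCont_logistic_power: "isCont (logistic_power r) x"
  unfolding logistic_power_def by (intro continuous_intros) (auto simp: add_pos_pos)

lemma borel_measurable_logistic_power[measurable]: "logistic_power r \<in> borel_measurable borel"
  unfolding logistic_power_def by measurable

lemma fourier_logistic_power:
  fixes r y :: real
  assumes r: "r > 0"
  shows "has_bochner_integral lborel (\<lambda>v. of_real (logistic_power r v) * exp (\<i> * of_real (y * v)))
           (of_real ((cmod (Gamma (Complex r y)))\<^sup>2 / Gamma (2 * r)))"
proof -
  define p where "p = Complex r y"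
  have e: "exp (p * of_real v) * of_real ((1 + exp v) powr (- 2 * r)) = of_real (logistic_power r v) * exp (\<i> * of_real (y * v))" for v
  proof -
    have "p * of_real v = of_real (r * v) + \<i> * of_real (y * v)" by (simp add: complex_eq_iff p_def)
    then show ?thesis by (simp only: exp_add exp_of_real) (simp add: logistic_power_def)
  qed
  have c: "2 * of_real r - p = cnj p" by (simp add: complex_eq_iff p_def)
  have g2: "Gamma (2 * complex_of_real r) = of_real (Gamma (2 * r))"
    by (metis Gamma_complex_of_real of_real_mult of_real_numeral)
  have v: "Gamma p * Gamma (2 * of_real r - p) / Gamma (2 * of_real r) = of_real ((cmod (Gamma p))\<^sup>2 / Gamma (2 * r))"
    unfolding c g2 by (simp add: cnj_Gamma[symmetric] complex_norm_square[symmetric])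
  show ?thesis
    using has_bochner_integral_logistic_beta[OF r, of y] unfolding p_def[symmetric] by (elim has_bochner_integral_rewrite) (rule e, rule v)
qed

lemma has_bochner_integral_logistic_power:
  assumes r: "r > 0"
  shows "has_bochner_integral lborel (logistic_power r) ((cmod (Gamma (Complex r 0)))\<^sup>2 / Gamma (2 * r))"
proof -
  have "has_bochner_integral lborel (\<lambda>v. Re (of_real (logistic_power r v) * exp (\<i> * of_real (0 * v))))
           (Re (of_real ((cmod (Gamma (Complex r 0)))\<^sup>2 / Gamma (2 * r))))"
    by (rule has_bochner_integral_Re[OF fourier_logistic_power[OF r]])
  then show ?thesis by simp
qed

lemma fourier_gaussian:
  fixes \<delta> a :: real
  assumes d: "\<delta> > 0"
  shows "has_bochner_integral lborel (\<lambda>y. of_real (exp (- (\<delta> * y)\<^sup>2 / 2)) * exp (\<i> * of_real (a * y)))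
           (of_real (sqrt (2 * pi) / \<delta> * exp (- (a / \<delta>)\<^sup>2 / 2)))"
proof -
  let ?t = "a / \<delta>"
  have intS: "integrable lborel std_normal_density"
    using integrable_std_normal_moment[of 0] by simp
  have int0: "integrable lborel (\<lambda>x. std_normal_density x *\<^sub>R iexp (?t * x))"
    by (rule Bochner_Integration.integrable_bound[where f = std_normal_density, OF intS]) auto
  have "char std_normal_distribution ?t = of_real (exp (- (?t\<^sup>2) / 2))"
    by (simp add: char_std_normal_distribution)
  then have "(\<integral>x. std_normal_density x *\<^sub>R iexp (?t * x) \<partial>lborel) = of_real (exp (- (?t\<^sup>2) / 2))"
    unfolding char_def by (subst (asm) integral_density) auto
  with int0 have H0: "has_bochner_integral lborel (\<lambda>x. std_normal_density x *\<^sub>R iexp (?t * x)) (of_real (exp (- (?t\<^sup>2) / 2)))"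
    by (simp add: has_bochner_integral_iff)
  have "has_bochner_integral lborel (\<lambda>x. std_normal_density (0 + \<delta> * x) *\<^sub>R iexp (?t * (0 + \<delta> * x))) (of_real (exp (- (?t\<^sup>2) / 2)) /\<^sub>R \<bar>\<delta>\<bar>)"
    using H0 d by (subst (asm) lborel_has_bochner_integral_real_affine_iff[where c=\<delta> and t=0]) auto
  then have "has_bochner_integral lborel (\<lambda>x. of_real (sqrt (2 * pi)) * (std_normal_density (0 + \<delta> * x) *\<^sub>R iexp (?t * (0 + \<delta> * x))))
     (of_real (sqrt (2 * pi)) * (of_real (exp (- (?t\<^sup>2) / 2)) /\<^sub>R \<bar>\<delta>\<bar>))"
    by (rule has_bochner_integral_mult_right)
  then show ?thesis
    using d by (elim has_bochner_integral_rewrite) (simp_all add: std_normal_density_def scaleR_conv_of_real field_simps)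
qed

lemma integrable_gaussian:
  assumes d: "\<delta> > 0"
  shows "integrable lborel (\<lambda>y::real. exp (- (\<delta> * y)\<^sup>2 / 2))"
proof -
  have "has_bochner_integral lborel (\<lambda>y. Re (of_real (exp (- (\<delta> * y)\<^sup>2 / 2)) * exp (\<i> * of_real (0 * y))))
           (Re (of_real (sqrt (2 * pi) / \<delta> * exp (- (0 / \<delta>)\<^sup>2 / 2))))"
    by (rule has_bochner_integral_Re[OF fourier_gaussian[OF d]])
  then show ?thesis by (auto intro: integrable.intros)
qed

lemma norm_logistic_power_std_normal_le:
  assumes "r > 0"
  shows "norm (logistic_power r a * std_normal_density x) \<le> std_normal_density x"
proof -
  have "logistic_power r a * std_normal_density x \<le> 1 * std_normal_density x"
    using logistic_power_le_1[OF assms] by (intro mult_right_mono) auto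
  then show ?thesis
    by (simp add: abs_mult abs_of_pos[OF logistic_power_pos])
qed

lemma integrable_std_normal_density: "integrable lborel std_normal_density"
  using integrable_std_normal_moment[of 0] by simp

lemma integral_std_normal_density: "(\<integral>x. std_normal_density x \<partial>lborel) = 1"
  using integral_std_normal_moment_even[of 0] by simp

lemma integrable_logistic_power_std_normal:
  assumes "r > 0"
  shows "integrable lborel (\<lambda>x. logistic_power r (a + b * x) * std_normal_density x)"
  using norm_logistic_power_std_normal_le[OF assms]
  by (intro Bochner_Integration.integrable_bound[OF integrable_std_normal_density]) auto

lemma has_bochner_integral_logistic_power_gaussian:
  fixes r \<delta> \<theta> :: real
  assumes r: "r > 0" and d: "\<delta> > 0"
  shows "has_bochner_integral lborel (\<lambda>v. logistic_power r v * exp (- ((v + \<theta>) / \<delta>)\<^sup>2 / 2))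
           (sqrt (2 * pi) * \<delta> * (\<integral>x. logistic_power r (- \<theta> + \<delta> * x) * std_normal_density x \<partial>lborel))"
proof -
  let ?E = "\<integral>x. logistic_power r (- \<theta> + \<delta> * x) * std_normal_density x \<partial>lborel"
  have "has_bochner_integral lborel
      (\<lambda>x. sqrt (2 * pi) * (logistic_power r (- \<theta> + \<delta> * x) * std_normal_density x)) (sqrt (2 * pi) * ?E)"
    by (intro has_bochner_integral_mult_right has_bochner_integral_integrable
        integrable_logistic_power_std_normal r)
  then have "has_bochner_integral lborel
      (\<lambda>x. logistic_power r (- \<theta> + \<delta> * x) * exp (- ((- \<theta> + \<delta> * x + \<theta>) / \<delta>)\<^sup>2 / 2))
      ((sqrt (2 * pi) * \<delta> * ?E) /\<^sub>R \<bar>\<delta>\<bar>)"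
    using d by (elim has_bochner_integral_rewrite) (simp_all add: std_normal_density_def)
  then show ?thesis
    using d by (subst lborel_has_bochner_integral_real_affine_iff[where c = \<delta> and t = "- \<theta>"]) simp_all
qed

lemma fourier_Gamma_sq_gaussian:
  fixes r \<delta> \<theta> :: real
  assumes r: "r > 0" and d: "\<delta> > 0"
  shows "has_bochner_integral lborel
           (\<lambda>y. of_real ((cmod (Gamma (Complex r y)))\<^sup>2 * exp (- (\<delta> * y)\<^sup>2 / 2)) * exp (\<i> * of_real (\<theta> * y)))
           (of_real (2 * pi * Gamma (2 * r) * (\<integral>x. logistic_power r (- \<theta> + \<delta> * x) * std_normal_density x \<partial>lborel)))"
proof -
  define G2 where "G2 = Gamma (2 * r)"
  have G2: "G2 > 0" unfolding G2_def using r by (intro Gamma_real_pos) simp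
  define G where "G = (\<lambda>y::real. exp (- (\<delta> * y)\<^sup>2 / 2))"
  define Q where "Q = (\<lambda>y v. of_real (G2 * G y * logistic_power r v) * exp (\<i> * of_real ((v + \<theta>) * y)))"
  obtain Ih where Ih: "has_bochner_integral lborel (logistic_power r) Ih"
    using has_bochner_integral_logistic_power[OF r] by blast
  show ?thesis
  proof (rule lborel_Fubini_has_bochner_integral_iff[where F = Q, THEN iffD2])
    show "case_prod Q \<in> borel_measurable (lborel \<Otimes>\<^sub>M lborel)"
      unfolding Q_def G_def by measurable
    show "has_bochner_integral lborel (Q y)
        (of_real ((cmod (Gamma (Complex r y)))\<^sup>2 * exp (- (\<delta> * y)\<^sup>2 / 2)) * exp (\<i> * of_real (\<theta> * y)))" for y
    proof -
      have "has_bochner_integral lborel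
          (\<lambda>v. (of_real (G2 * G y) * exp (\<i> * of_real (\<theta> * y))) * (of_real (logistic_power r v) * exp (\<i> * of_real (y * v))))
          ((of_real (G2 * G y) * exp (\<i> * of_real (\<theta> * y))) * of_real ((cmod (Gamma (Complex r y)))\<^sup>2 / G2))"
        unfolding G2_def by (intro has_bochner_integral_mult_right fourier_logistic_power r)
      moreover have "exp (\<i> * complex_of_real ((v + \<theta>) * y)) = exp (\<i> * of_real (\<theta> * y)) * exp (\<i> * of_real (y * v))" for v
        by (simp add: algebra_simps flip: exp_add)
      ultimately show ?thesis
        using G2 by (elim has_bochner_integral_rewrite) (simp_all add: Q_def G_def field_simps)
    qed
    show "has_bochner_integral lborel (\<lambda>v. norm (Q y v)) (G2 * G y * Ih)" for y
      using G2 Ih by (simp add: Q_def G_def norm_mult abs_mult abs_of_pos[OF logistic_power_pos]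
          has_bochner_integral_mult_right)
    show "integrable lborel (\<lambda>y. G2 * G y * Ih)"
      using integrable_gaussian[OF d] unfolding G_def by simp
    show "has_bochner_integral lborel (\<lambda>y. Q y v)
        (of_real (G2 * sqrt (2 * pi) / \<delta> * (logistic_power r v * exp (- ((v + \<theta>) / \<delta>)\<^sup>2 / 2))))" for v
    proof -
      have "has_bochner_integral lborel
          (\<lambda>y. of_real (G2 * logistic_power r v) * (of_real (exp (- (\<delta> * y)\<^sup>2 / 2)) * exp (\<i> * of_real ((v + \<theta>) * y))))
          (of_real (G2 * logistic_power r v) * of_real (sqrt (2 * pi) / \<delta> * exp (- ((v + \<theta>) / \<delta>)\<^sup>2 / 2)))"
        by (intro has_bochner_integral_mult_right fourier_gaussian d)
      then show ?thesis
        by (elim has_bochner_integral_rewrite) (simp_all add: Q_def G_def mult_ac)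
    qed
    let ?E = "\<integral>x. logistic_power r (- \<theta> + \<delta> * x) * std_normal_density x \<partial>lborel"
    have "has_bochner_integral lborel
        (\<lambda>v. G2 * sqrt (2 * pi) / \<delta> * (logistic_power r v * exp (- ((v + \<theta>) / \<delta>)\<^sup>2 / 2)))
        (G2 * sqrt (2 * pi) / \<delta> * (sqrt (2 * pi) * \<delta> * ?E))"
      by (intro has_bochner_integral_mult_right has_bochner_integral_logistic_power_gaussian r d)
    moreover have "G2 * sqrt (2 * pi) / \<delta> * (sqrt (2 * pi) * \<delta> * ?E) = 2 * pi * Gamma (2 * r) * ?E"
      using d by (simp add: G2_def)
    ultimately have "has_bochner_integral lborel
        (\<lambda>v. G2 * sqrt (2 * pi) / \<delta> * (logistic_power r v * exp (- ((v + \<theta>) / \<delta>)\<^sup>2 / 2)))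
        (2 * pi * Gamma (2 * r) * ?E)"
      by simp
    then show "has_bochner_integral lborel
        (\<lambda>v. of_real (G2 * sqrt (2 * pi) / \<delta> * (logistic_power r v * exp (- ((v + \<theta>) / \<delta>)\<^sup>2 / 2))) :: complex)
        (of_real (2 * pi * Gamma (2 * r) * ?E))"
      by (rule has_bochner_integral_of_real)
  qed
qed

lemma continuous_on_Gamma_sq_line:
  assumes r: "r > 0"
  shows "continuous_on UNIV (\<lambda>y. (cmod (Gamma (Complex r y)))\<^sup>2)"
proof -
  have e: "(\<lambda>y. Complex r y) = (\<lambda>y. of_real r + \<i> * of_real y)"
    by (auto simp: complex_eq_iff)
  have "continuous_on UNIV (\<lambda>y. Complex r y)" unfolding e by (intro continuous_intros)
  moreover have "continuous_on ((\<lambda>y. Complex r y) ` UNIV) Gamma"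
    using r by (intro continuous_on_Gamma) (force simp: complex_eq_iff elim!: nonpos_Ints_cases)
  ultimately have "continuous_on UNIV (Gamma \<circ> (\<lambda>y. Complex r y))"
    by (rule continuous_on_compose)
  then have "continuous_on UNIV (\<lambda>y. Gamma (Complex r y))" by (simp add: o_def)
  then show ?thesis by (intro continuous_intros)
qed

lemma borel_measurable_Gamma_sq_line[measurable]:
  assumes r: "r > 0"
  shows "(\<lambda>y. (cmod (Gamma (Complex r y)))\<^sup>2) \<in> borel_measurable borel"
  using continuous_on_Gamma_sq_line[OF r] by (rule borel_measurable_continuous_onI)

lemma logistic_power_gaussian_smoothing:
  assumes r: "r > 0"
  shows "(\<lambda>n. \<integral>x. logistic_power r (- \<theta> + inverse (real (Suc n)) * x) * std_normal_density x \<partial>lborel)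
           \<longlonglongrightarrow> logistic_power r (- \<theta>)"
proof -
  have "(\<lambda>n. \<integral>x. logistic_power r (- \<theta> + inverse (real (Suc n)) * x) * std_normal_density x \<partial>lborel) \<longlonglongrightarrow>
        (\<integral>x. logistic_power r (- \<theta>) * std_normal_density x \<partial>lborel)"
  proof (rule integral_dominated_convergence[where w = std_normal_density])
    show "AE x in lborel. (\<lambda>n. logistic_power r (- \<theta> + inverse (real (Suc n)) * x) * std_normal_density x)
        \<longlonglongrightarrow> logistic_power r (- \<theta>) * std_normal_density x"
    proof (intro AE_I2 tendsto_mult_right)
      fix x :: real
      have "(\<lambda>n. - \<theta> + inverse (real (Suc n)) * x) \<longlonglongrightarrow> - \<theta> + 0 * x"
        by (intro tendsto_intros LIMSEQ_inverse_real_of_nat)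
      then show "(\<lambda>n. logistic_power r (- \<theta> + inverse (real (Suc n)) * x)) \<longlonglongrightarrow> logistic_power r (- \<theta>)"
        using isCont_tendsto_compose[OF isCont_logistic_power] by fastforce
    qed
  qed (auto simp: integrable_std_normal_density
      intro!: AE_I2 norm_logistic_power_std_normal_le[OF r, unfolded real_norm_def])
  then show ?thesis by (simp add: integral_std_normal_density)
qed

lemma gaussian_cutoff_tendsto_1: "(\<lambda>n. exp (- (inverse (real (Suc n)) * y)\<^sup>2 / 2)) \<longlonglongrightarrow> 1"
proof -
  have "(\<lambda>n. exp (- (inverse (real (Suc n)) * y)\<^sup>2 / 2)) \<longlonglongrightarrow> exp (- (0 * y)\<^sup>2 / 2)"
    by (intro tendsto_intros LIMSEQ_inverse_real_of_nat) auto
  then show ?thesis by simp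
qed

lemma integrable_Gamma_sq_line:
  assumes r: "r > 0"
  shows "integrable lborel (\<lambda>y. (cmod (Gamma (Complex r y)))\<^sup>2)"
proof (rule integrable_monotone_convergence
    [where f = "\<lambda>n y. (cmod (Gamma (Complex r y)))\<^sup>2 * exp (- (inverse (real (Suc n)) * y)\<^sup>2 / 2)"])
  let ?E = "\<lambda>n. \<integral>x. logistic_power r (- 0 + inverse (real (Suc n)) * x) * std_normal_density x \<partial>lborel"
  have I: "has_bochner_integral lborel
      (\<lambda>y. (cmod (Gamma (Complex r y)))\<^sup>2 * exp (- (inverse (real (Suc n)) * y)\<^sup>2 / 2))
      (2 * pi * Gamma (2 * r) * ?E n)" for n
    using has_bochner_integral_Re[OF fourier_Gamma_sq_gaussian[OF r, of "inverse (real (Suc n))" 0]] by simp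
  then show "integrable lborel (\<lambda>y. (cmod (Gamma (Complex r y)))\<^sup>2 * exp (- (inverse (real (Suc n)) * y)\<^sup>2 / 2))" for n
    by (rule integrable.intros)
  show "AE y in lborel. mono (\<lambda>n. (cmod (Gamma (Complex r y)))\<^sup>2 * exp (- (inverse (real (Suc n)) * y)\<^sup>2 / 2))"
  proof (intro AE_I2 incseq_SucI mult_left_mono)
    fix y :: real and n :: nat
    have "(inverse (real (Suc (Suc n))) * \<bar>y\<bar>)\<^sup>2 \<le> (inverse (real (Suc n)) * \<bar>y\<bar>)\<^sup>2"
      by (intro power_mono mult_right_mono) (simp_all add: field_simps)
    then show "exp (- (inverse (real (Suc n)) * y)\<^sup>2 / 2) \<le> exp (- (inverse (real (Suc (Suc n))) * y)\<^sup>2 / 2)"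
      by (simp add: power_mult_distrib)
  qed simp
  show "AE y in lborel. (\<lambda>n. (cmod (Gamma (Complex r y)))\<^sup>2 * exp (- (inverse (real (Suc n)) * y)\<^sup>2 / 2))
      \<longlonglongrightarrow> (cmod (Gamma (Complex r y)))\<^sup>2"
    using tendsto_mult_left[OF gaussian_cutoff_tendsto_1] by (auto intro!: AE_I2)
  show "(\<lambda>n. integral\<^sup>L lborel (\<lambda>y. (cmod (Gamma (Complex r y)))\<^sup>2 * exp (- (inverse (real (Suc n)) * y)\<^sup>2 / 2)))
      \<longlonglongrightarrow> 2 * pi * Gamma (2 * r) * logistic_power r (- 0)"
    unfolding has_bochner_integral_integral_eq[OF I] by (intro tendsto_intros logistic_power_gaussian_smoothing r)
qed (use borel_measurable_Gamma_sq_line[OF r] in simp)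

lemma fourier_Gamma_sq:
  fixes r \<theta> :: real
  assumes r: "r > 0"
  shows "has_bochner_integral lborel (\<lambda>y. of_real ((cmod (Gamma (Complex r y)))\<^sup>2) * exp (\<i> * of_real (\<theta> * y)))
            (of_real (2 * pi * Gamma (2 * r) * logistic_power r (- \<theta>)))"
proof -
  define f where "f = (\<lambda>y. of_real ((cmod (Gamma (Complex r y)))\<^sup>2) * exp (\<i> * of_real (\<theta> * y)) :: complex)"
  define f\<^sub>n where "f\<^sub>n = (\<lambda>n y. of_real ((cmod (Gamma (Complex r y)))\<^sup>2 * exp (- (inverse (real (Suc n)) * y)\<^sup>2 / 2))
      * exp (\<i> * of_real (\<theta> * y)) :: complex)"
  have I: "has_bochner_integral lborel (f\<^sub>n n) (of_real (2 * pi * Gamma (2 * r) *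
      (\<integral>x. logistic_power r (- \<theta> + inverse (real (Suc n)) * x) * std_normal_density x \<partial>lborel)))" for n
    unfolding f\<^sub>n_def by (intro fourier_Gamma_sq_gaussian r) simp
  have [measurable]: "f \<in> borel_measurable lborel"
    unfolding f_def using borel_measurable_Gamma_sq_line[OF r] by measurable
  have meas: "f\<^sub>n n \<in> borel_measurable lborel" for n
    using I[of n] by (auto intro: borel_measurable_integrable integrable.intros)
  have lim: "AE y in lborel. (\<lambda>n. f\<^sub>n n y) \<longlonglongrightarrow> f y"
  proof (intro AE_I2)
    fix y
    have "(\<lambda>n. (cmod (Gamma (Complex r y)))\<^sup>2 * exp (- (inverse (real (Suc n)) * y)\<^sup>2 / 2))
        \<longlonglongrightarrow> (cmod (Gamma (Complex r y)))\<^sup>2"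
      using tendsto_mult_left[OF gaussian_cutoff_tendsto_1] by simp
    then show "(\<lambda>n. f\<^sub>n n y) \<longlonglongrightarrow> f y"
      unfolding f_def f\<^sub>n_def by (intro tendsto_mult_right tendsto_of_real)
  qed
  have bound: "AE y in lborel. norm (f\<^sub>n n y) \<le> (cmod (Gamma (Complex r y)))\<^sup>2" for n
    unfolding f\<^sub>n_def
    by (intro AE_I2) (simp add: norm_mult norm_power mult_right_le_one_le del: of_real_power)
  have "(\<lambda>n. integral\<^sup>L lborel (f\<^sub>n n)) \<longlonglongrightarrow> integral\<^sup>L lborel f"
    by (rule integral_dominated_convergence[OF _ meas integrable_Gamma_sq_line[OF r] lim bound]) simp
  moreover have "(\<lambda>n. integral\<^sup>L lborel (f\<^sub>n n)) \<longlonglongrightarrow> of_real (2 * pi * Gamma (2 * r) * logistic_power r (- \<theta>))"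
    unfolding has_bochner_integral_integral_eq[OF I]
    by (intro tendsto_of_real tendsto_intros logistic_power_gaussian_smoothing r)
  ultimately have "integral\<^sup>L lborel f = of_real (2 * pi * Gamma (2 * r) * logistic_power r (- \<theta>))"
    by (rule LIMSEQ_unique)
  moreover have "integrable lborel f"
    by (rule integrable_dominated_convergence[OF _ meas integrable_Gamma_sq_line[OF r] lim bound]) simp
  ultimately show ?thesis
    unfolding f_def by (simp add: has_bochner_integral_iff)
qed

lemma fourier_Gamma_sq_shift:
  fixes r \<theta> \<beta> :: real
  assumes r: "r > 0"
  shows "has_bochner_integral lborel (\<lambda>y. of_real ((cmod (Gamma (Complex r (y - \<beta>))))\<^sup>2) * exp (\<i> * of_real (\<theta> * y)))
           (exp (\<i> * of_real (\<theta> * \<beta>)) * of_real (2 * pi * Gamma (2 * r) * logistic_power r (- \<theta>)))"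
proof -
  have "has_bochner_integral lborel (\<lambda>y. of_real ((cmod (Gamma (Complex r (- \<beta> + 1 * y))))\<^sup>2) * exp (\<i> * of_real (\<theta> * (- \<beta> + 1 * y))))
          (of_real (2 * pi * Gamma (2 * r) * logistic_power r (- \<theta>)) /\<^sub>R \<bar>1\<bar>)"
    using fourier_Gamma_sq[OF r, of \<theta>] by (subst (asm) lborel_has_bochner_integral_real_affine_iff[where c=1 and t="- \<beta>"]) auto
  then have "has_bochner_integral lborel (\<lambda>y. exp (\<i> * of_real (\<theta> * \<beta>)) * (of_real ((cmod (Gamma (Complex r (- \<beta> + 1 * y))))\<^sup>2) * exp (\<i> * of_real (\<theta> * (- \<beta> + 1 * y)))))
          (exp (\<i> * of_real (\<theta> * \<beta>)) * (of_real (2 * pi * Gamma (2 * r) * logistic_power r (- \<theta>)) /\<^sub>R \<bar>1\<bar>))"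
    by (rule has_bochner_integral_mult_right)
  then show ?thesis
  proof (elim has_bochner_integral_rewrite)
    fix y
    have "\<i> * of_real (\<theta> * \<beta>) + \<i> * of_real (\<theta> * (- \<beta> + 1 * y)) = \<i> * of_real (\<theta> * y)"
      by (simp add: algebra_simps)
    then show "exp (\<i> * of_real (\<theta> * \<beta>)) * (of_real ((cmod (Gamma (Complex r (- \<beta> + 1 * y))))\<^sup>2) * exp (\<i> * of_real (\<theta> * (- \<beta> + 1 * y)))) =
       of_real ((cmod (Gamma (Complex r (y - \<beta>))))\<^sup>2) * exp (\<i> * of_real (\<theta> * y))"
      by (simp add: exp_add[symmetric] mult_ac)
  qed simp
qed

lemma has_bochner_integral_Gamma_sq_shift:
  fixes r \<beta> :: real
  assumes r: "r > 0"
  shows "has_bochner_integral lborel (\<lambda>y. (cmod (Gamma (Complex r (y - \<beta>))))\<^sup>2) (2 * pi * Gamma (2 * r) * logistic_power r 0)"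
proof -
  have "has_bochner_integral lborel (\<lambda>y. Re (of_real ((cmod (Gamma (Complex r (y - \<beta>))))\<^sup>2) * exp (\<i> * of_real (0 * y))))
          (Re (exp (\<i> * of_real (0 * \<beta>)) * of_real (2 * pi * Gamma (2 * r) * logistic_power r (- 0))))"
    by (rule has_bochner_integral_Re[OF fourier_Gamma_sq_shift[OF r]])
  then show ?thesis by simp
qed

text \<open>The terms of the hypergeometric series 2F1(-w, -cnj w; c; 1).\<close>

definition gauss_term :: "complex \<Rightarrow> real \<Rightarrow> nat \<Rightarrow> real" where
  "gauss_term w c n = (cmod (pochhammer (- w) n))\<^sup>2 / (pochhammer c n * fact n)"

lemma newton_poly_pochhammer: "newton_poly n w = pochhammer (- w) n / of_nat (fact n)"
proof -
  have "(-1) ^ n * (\<Prod>j<n. w - of_nat j) = pochhammer (- w) n"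
    by (induction n) (simp_all add: pochhammer_Suc algebra_simps)
  then show ?thesis unfolding newton_poly_def by simp
qed

lemma norm_newton_poly_sq: "(cmod (newton_poly n w))\<^sup>2 = gauss_term w 1 n"
  by (simp add: newton_poly_pochhammer gauss_term_def norm_divide power_divide pochhammer_fact[symmetric]
                power2_eq_square)

lemma norm_pochhammer_Suc_sq:
  "(cmod (pochhammer (- w) (Suc n)))\<^sup>2 = (cmod (pochhammer (- w) n))\<^sup>2 * (cmod (of_nat n - w))\<^sup>2"
  by (simp add: pochhammer_Suc norm_mult power_mult_distrib)

lemma pochhammer_mono:
  fixes a b :: real
  assumes "0 < a" "a \<le> b"
  shows "pochhammer a n \<le> pochhammer b n"
proof (induction n)
  case (Suc n)
  have "pochhammer a n * (a + of_nat n) \<le> pochhammer b n * (b + of_nat n)"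
    using Suc assms by (intro mult_mono) (auto intro: pochhammer_nonneg)
  then show ?case by (simp add: pochhammer_Suc)
qed simp

lemma gauss_term_0: "gauss_term w c 0 = 1"
  by (simp add: gauss_term_def)

lemma gauss_term_nonneg: "c > 0 \<Longrightarrow> gauss_term w c n \<ge> 0"
  unfolding gauss_term_def using pochhammer_pos[of c n] by (intro divide_nonneg_pos) auto

lemma gauss_term_le: "c \<ge> 1 \<Longrightarrow> gauss_term w c n \<le> gauss_term w 1 n"
  unfolding gauss_term_def using pochhammer_mono[of 1 c n] pochhammer_pos[of "1::real" n]
  by (intro divide_left_mono mult_right_mono) auto

lemma norm_pochhammer_Suc_bound:
  fixes z :: complex
  obtains K where "K > 0" "\<And>m. m \<ge> 1 \<Longrightarrow> cmod (pochhammer z (Suc m)) \<le> K * (fact m * real m powr Re z)"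
proof -
  have "convergent (rGamma_series z)"
    using rGamma_series_LIMSEQ by (auto simp: convergent_def)
  then have "Bseq (rGamma_series z)" by (rule convergent_imp_Bseq)
  then obtain K where K: "K > 0" "\<And>n. norm (rGamma_series z n) \<le> K"
    by (auto simp: Bseq_def)
  have "cmod (pochhammer z (Suc m)) \<le> K * (fact m * real m powr Re z)" if "m \<ge> 1" for m
  proof -
    have "norm (rGamma_series z m) = cmod (pochhammer z (Suc m)) / (fact m * real m powr Re z)"
      using that unfolding rGamma_series_def by (simp add: norm_divide norm_mult powr_def)
    then show ?thesis
      using K(2)[of m] that by (simp add: divide_le_eq)
  qed
  with K(1) show ?thesis by (rule that)
qed

lemma gauss_term_Suc_bound:
  obtains K where "K > 0" "\<And>m. m \<ge> 1 \<Longrightarrow> gauss_term w 1 (Suc m) \<le> K * real m powr (- 2 * Re w - 2)"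
proof -
  obtain K where K: "K > 0" "\<And>m. m \<ge> 1 \<Longrightarrow> cmod (pochhammer (- w) (Suc m)) \<le> K * (fact m * real m powr (- Re w))"
    using norm_pochhammer_Suc_bound[of "- w"] by auto
  have "gauss_term w 1 (Suc m) \<le> K\<^sup>2 * real m powr (- 2 * Re w - 2)" if m: "m \<ge> 1" for m
  proof -
    have m0: "real m > 0" using m by simp
    have "gauss_term w 1 (Suc m) = (cmod (pochhammer (- w) (Suc m)))\<^sup>2 / ((real m + 1) * fact m)\<^sup>2"
      by (simp add: gauss_term_def pochhammer_fact[symmetric] power2_eq_square algebra_simps)
    also have "\<dots> \<le> (K * (fact m * real m powr (- Re w)))\<^sup>2 / ((real m + 1) * fact m)\<^sup>2"
      using K(2)[OF m] by (intro divide_right_mono power_mono) auto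
    also have "\<dots> = K\<^sup>2 * real m powr (- 2 * Re w) / (real m + 1)\<^sup>2"
      using m0 by (simp add: power_mult_distrib powr_add[symmetric] power2_eq_square)
    also have "\<dots> \<le> K\<^sup>2 * real m powr (- 2 * Re w) / (real m)\<^sup>2"
      using m0 by (intro divide_left_mono mult_pos_pos power_mono) auto
    also have "\<dots> = K\<^sup>2 * real m powr (- 2 * Re w - 2)"
      using m0 by (simp add: powr_diff powr_realpow)
    finally show ?thesis .
  qed
  then show ?thesis using K(1) by (intro that[of "K\<^sup>2"]) auto
qed

lemma summable_gauss_term:
  assumes "Re w > - 1 / 2" "c \<ge> 1"
  shows "summable (gauss_term w c)"
proof -
  obtain K where K: "K > 0" "\<And>m. m \<ge> 1 \<Longrightarrow> gauss_term w 1 (Suc m) \<le> K * real m powr (- 2 * Re w - 2)"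
    using gauss_term_Suc_bound by blast
  have "summable (\<lambda>m. K * real m powr (- 2 * Re w - 2))"
    using assms(1) by (intro summable_mult) (simp add: summable_real_powr_iff)
  then have "summable (\<lambda>m. gauss_term w c (Suc m))"
  proof (rule summable_comparison_test'[where N = 1])
    fix m :: nat assume "m \<ge> 1"
    then show "norm (gauss_term w c (Suc m)) \<le> K * real m powr (- 2 * Re w - 2)"
      using K(2)[of m] gauss_term_le[OF assms(2), of w "Suc m"] gauss_term_nonneg[of c w "Suc m"] assms(2) by simp
  qed
  then show ?thesis by (simp add: summable_Suc_iff)
qed

lemma gauss_term_mult_tendsto_0:
  assumes w: "Re w > - 1 / 2" and c: "c \<ge> 1"
  shows "(\<lambda>n. real n * gauss_term w c n) \<longlonglongrightarrow> 0"
proof -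
  obtain K where K: "K > 0" "\<And>m. m \<ge> 1 \<Longrightarrow> gauss_term w 1 (Suc m) \<le> K * real m powr (- 2 * Re w - 2)"
    using gauss_term_Suc_bound by blast
  have bound: "norm (real (Suc m) * gauss_term w c (Suc m)) \<le> 2 * K * real m powr (- 2 * Re w - 1)" if m: "m \<ge> 1" for m
  proof -
    have t: "0 \<le> gauss_term w c (Suc m)" "gauss_term w c (Suc m) \<le> K * real m powr (- 2 * Re w - 2)"
      using gauss_term_nonneg[of c w "Suc m"] gauss_term_le[OF c, of w "Suc m"] K(2)[OF m] c by auto
    then have "norm (real (Suc m) * gauss_term w c (Suc m)) \<le> (2 * real m) * (K * real m powr (- 2 * Re w - 2))"
      using m by (simp, intro mult_mono) auto
    also have "\<dots> = 2 * K * real m powr (- 2 * Re w - 1)"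
      using m by (simp add: powr_diff powr_numeral power2_eq_square)
    finally show ?thesis .
  qed
  have "(\<lambda>m. 2 * K * real m powr (- 2 * Re w - 1)) \<longlonglongrightarrow> 2 * K * 0"
    using w by (intro tendsto_intros tendsto_neg_powr filterlim_real_sequentially) auto
  then have "(\<lambda>m. 2 * K * real m powr (- 2 * Re w - 1)) \<longlonglongrightarrow> 0"
    by simp
  then have "(\<lambda>m. real (Suc m) * gauss_term w c (Suc m)) \<longlonglongrightarrow> 0"
    by (rule Lim_null_comparison[OF eventually_sequentiallyI[of 1], rotated]) (rule bound)
  then show ?thesis by (rule LIMSEQ_imp_Suc)
qed

definition gauss_sum :: "complex \<Rightarrow> real \<Rightarrow> real" where
  "gauss_sum w c = suminf (gauss_term w c)"

lemma gauss_term_plus_1: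
  assumes c: "c > 0"
  shows "gauss_term w (c + 1) n = gauss_term w c n * c / (c + real n)"
proof -
  have "c * pochhammer (c + 1) n = pochhammer c n * (c + real n)"
    using pochhammer_rec[of c n] pochhammer_Suc[of c n] by simp
  then have p: "pochhammer (c + 1) n = pochhammer c n * (c + real n) / c"
    using c by (simp add: field_simps)
  have "pochhammer c n > 0" "c + real n > 0" using c by (simp_all add: pochhammer_pos)
  then show ?thesis
    using c unfolding gauss_term_def p by (simp add: field_simps)
qed

lemma gauss_term_Suc:
  "gauss_term w c (Suc n) = gauss_term w c n * (cmod (of_nat n - w))\<^sup>2 / ((c + real n) * real (Suc n))"
  unfolding gauss_term_def norm_pochhammer_Suc_sq by (simp add: pochhammer_Suc fact_Suc field_simps)

lemma gauss_term_contiguous: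
  fixes c :: real
  assumes c: "c > 0"
  shows "c * (c + 2 * Re w) * gauss_term w c n - (cmod (of_real c + w))\<^sup>2 * gauss_term w (c + 1) n =
         c * real n * gauss_term w c n - c * real (Suc n) * gauss_term w c (Suc n)"
proof -
  define X where "X = gauss_term w c n"
  have cn: "c + real n > 0" using c by simp
  have "c * (c + 2 * Re w) * X - (cmod (of_real c + w))\<^sup>2 * (X * c / (c + real n)) =
      c * X / (c + real n) * ((c + 2 * Re w) * (c + real n) - (cmod (of_real c + w))\<^sup>2)"
    using cn by (simp add: field_simps)
  also have "(c + 2 * Re w) * (c + real n) - (cmod (of_real c + w))\<^sup>2 =
      real n * (c + real n) - (cmod (of_nat n - w))\<^sup>2"
    unfolding cmod_power2 by (simp add: power2_eq_square algebra_simps)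
  also have "c * X / (c + real n) * (real n * (c + real n) - (cmod (of_nat n - w))\<^sup>2) =
      c * real n * X - c * real (Suc n) * (X * (cmod (of_nat n - w))\<^sup>2 / ((c + real n) * real (Suc n)))"
  proof -
    have "(c + real n) * real (Suc n) > 0" using cn by simp
    then show ?thesis using cn by (simp add: field_simps)
  qed
  finally show ?thesis
    unfolding gauss_term_plus_1[OF c] gauss_term_Suc X_def .
qed

lemma gauss_sum_contiguous:
  assumes w: "Re w > - 1 / 2" and c: "c \<ge> 1"
  shows "c * (c + 2 * Re w) * gauss_sum w c = (cmod (of_real c + w))\<^sup>2 * gauss_sum w (c + 1)"
proof -
  have c0: "c > 0" using c by simp
  define g where "g = (\<lambda>n. c * (real n * gauss_term w c n))"
  have g0: "g \<longlonglongrightarrow> c * 0" unfolding g_def by (intro tendsto_intros gauss_term_mult_tendsto_0[OF w c])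
  have "(\<lambda>n. g n - g (Suc n)) sums (g 0 - 0)"
    using g0 by (intro telescope_sums') simp
  moreover have "g n - g (Suc n) = c * (c + 2 * Re w) * gauss_term w c n - (cmod (of_real c + w))\<^sup>2 * gauss_term w (c + 1) n" for n
    using gauss_term_contiguous[OF c0, of w n] unfolding g_def by (simp only: mult.assoc)
  ultimately have s1: "(\<lambda>n. c * (c + 2 * Re w) * gauss_term w c n - (cmod (of_real c + w))\<^sup>2 * gauss_term w (c + 1) n) sums 0"
    by (simp add: g_def)
  have s2: "(\<lambda>n. c * (c + 2 * Re w) * gauss_term w c n - (cmod (of_real c + w))\<^sup>2 * gauss_term w (c + 1) n) sums
        (c * (c + 2 * Re w) * gauss_sum w c - (cmod (of_real c + w))\<^sup>2 * gauss_sum w (c + 1))"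
    unfolding gauss_sum_def using c
    by (intro sums_diff sums_mult summable_sums summable_gauss_term[OF w]) auto
  from sums_unique2[OF s1 s2] show ?thesis by simp
qed

definition gauss_ratio :: "complex \<Rightarrow> real \<Rightarrow> real" where
  "gauss_ratio w c = gauss_sum w c * (cmod (Gamma (of_real c + w)))\<^sup>2 / (Gamma c * Gamma (c + 2 * Re w))"

lemma gauss_ratio_Suc:
  assumes w: "Re w > - 1 / 2" and c: "c \<ge> 1"
  shows "gauss_ratio w (c + 1) = gauss_ratio w c"
proof -
  have c0: "c > 0" using c by simp
  have cr: "c + 2 * Re w > 0" using w c by simp
  have z: "Re (of_real c + w) > 0" using w c by simp
  have g1: "Gamma (of_real (c + 1) + w) = (of_real c + w) * Gamma (of_real c + w)"
    using Gamma_plus1[OF Re_pos_not_nonpos_Ints[OF z]] by (simp add: algebra_simps)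
  have g2: "Gamma (c + 1) = c * Gamma c" using Gamma_plus1[OF pos_real_not_nonpos_Ints[OF c0]] .
  have g3: "Gamma (c + 1 + 2 * Re w) = (c + 2 * Re w) * Gamma (c + 2 * Re w)"
    using Gamma_plus1[OF pos_real_not_nonpos_Ints[OF cr]] by (simp add: algebra_simps)
  have Gc: "Gamma c > 0" using c0 by (rule Gamma_real_pos)
  have G2: "Gamma (c + 2 * Re w) > 0" using cr by (rule Gamma_real_pos)
  have "gauss_ratio w (c + 1) = ((cmod (of_real c + w))\<^sup>2 * gauss_sum w (c + 1)) * (cmod (Gamma (of_real c + w)))\<^sup>2 /
          (c * (c + 2 * Re w) * (Gamma c * Gamma (c + 2 * Re w)))"
    unfolding gauss_ratio_def g1 g2 g3 by (simp add: norm_mult power_mult_distrib mult_ac)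
  also have "\<dots> = (c * (c + 2 * Re w) * gauss_sum w c) * (cmod (Gamma (of_real c + w)))\<^sup>2 /
          (c * (c + 2 * Re w) * (Gamma c * Gamma (c + 2 * Re w)))"
    by (simp only: gauss_sum_contiguous[OF w c, symmetric])
  also have "\<dots> = gauss_ratio w c"
  proof -
    have a: "c \<noteq> 0" "c + 2 * Re w \<noteq> 0" using c0 cr by auto
    show ?thesis unfolding gauss_ratio_def mult.assoc
      by (simp only: mult_divide_mult_cancel_left[OF a(1)] mult_divide_mult_cancel_left[OF a(2)])
  qed
  finally show ?thesis .
qed

lemma gauss_ratio_plus_nat:
  assumes w: "Re w > - 1 / 2"
  shows "gauss_ratio w (1 + real N) = gauss_ratio w 1"
proof (induction N)
  case (Suc N)
  have "gauss_ratio w (1 + real (Suc N)) = gauss_ratio w ((1 + real N) + 1)" by (simp add: algebra_simps)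
  also have "\<dots> = gauss_ratio w (1 + real N)" by (rule gauss_ratio_Suc[OF w]) simp
  finally show ?case using Suc by simp
qed simp

lemma pochhammer_Suc_ge_mult:
  fixes c :: real
  assumes "c \<ge> 1"
  shows "c * pochhammer 1 (Suc n) \<le> pochhammer c (Suc n)"
proof -
  have "pochhammer c (Suc n) = c * pochhammer (c + 1) n"
    using pochhammer_rec[of c n] by (simp add: algebra_simps)
  moreover have "pochhammer 1 (Suc n) = pochhammer (2::real) n"
    using pochhammer_rec[of "1::real" n] by simp
  moreover have "pochhammer (2::real) n \<le> pochhammer (c + 1) n"
    using assms by (intro pochhammer_mono) auto
  ultimately show ?thesis
    using assms by (simp add: mult_left_mono)
qed

lemma gauss_term_Suc_le_divide:
  assumes c: "c \<ge> 1"
  shows "gauss_term w c (Suc n) \<le> gauss_term w 1 (Suc n) / c"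
proof -
  have "0 < pochhammer (1::real) (Suc n)" by (rule pochhammer_pos) simp
  then have "(cmod (pochhammer (- w) (Suc n)))\<^sup>2 / (pochhammer c (Suc n) * fact (Suc n)) \<le>
      (cmod (pochhammer (- w) (Suc n)))\<^sup>2 / (c * pochhammer 1 (Suc n) * fact (Suc n))"
    using pochhammer_Suc_ge_mult[OF c, of n] pochhammer_pos[of c "Suc n"] c
    by (intro divide_left_mono mult_right_mono mult_pos_pos) auto
  then show ?thesis
    unfolding gauss_term_def by (simp add: divide_divide_eq_left mult_ac)
qed

lemma gauss_sum_tendsto_1:
  assumes w: "Re w > - 1 / 2"
  shows "(\<lambda>N. gauss_sum w (1 + real N)) \<longlonglongrightarrow> 1"
proof -
  define C where "C = (\<Sum>n. gauss_term w 1 (Suc n))"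
  have summable_Suc: "summable (\<lambda>n. gauss_term w c (Suc n))" if "c \<ge> 1" for c
    using summable_gauss_term[OF w that] by (simp add: summable_Suc_iff)
  have bound: "norm (gauss_sum w (1 + real N) - 1) \<le> C / (1 + real N)" for N
  proof -
    have "gauss_sum w (1 + real N) - 1 = (\<Sum>n. gauss_term w (1 + real N) (Suc n))"
      unfolding gauss_sum_def using suminf_split_head[OF summable_gauss_term[OF w, of "1 + real N"]]
      by (simp add: gauss_term_0)
    moreover have "0 \<le> (\<Sum>n. gauss_term w (1 + real N) (Suc n))"
      by (rule suminf_nonneg[OF summable_Suc gauss_term_nonneg]) simp_all
    ultimately have "norm (gauss_sum w (1 + real N) - 1) = (\<Sum>n. gauss_term w (1 + real N) (Suc n))"
      by (simp only: real_norm_def abs_of_nonneg)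
    also have "\<dots> \<le> (\<Sum>n. gauss_term w 1 (Suc n) / (1 + real N))"
      by (rule suminf_le[OF gauss_term_Suc_le_divide summable_Suc summable_divide[OF summable_Suc]]) simp_all
    also have "\<dots> = C / (1 + real N)"
      unfolding C_def using summable_Suc[of 1] by (simp add: suminf_divide)
    finally show ?thesis .
  qed
  have "(\<lambda>N. C / (1 + real N)) \<longlonglongrightarrow> 0"
    by (intro tendsto_divide_0[OF tendsto_const] filterlim_at_top_imp_at_infinity
        filterlim_tendsto_add_at_top[OF tendsto_const filterlim_real_sequentially])
  then have "(\<lambda>N. gauss_sum w (1 + real N) - 1) \<longlonglongrightarrow> 0"
    by (rule Lim_null_comparison[rotated]) (use bound in \<open>simp add: always_eventually\<close>)
  then show ?thesis by (rule LIM_zero_cancel)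
qed

lemma Gamma_shift_asymptotic:
  fixes z :: "'a :: Gamma"
  assumes "z \<notin> \<int>\<^sub>\<le>\<^sub>0"
  shows "(\<lambda>n. Gamma (z + of_nat (Suc n)) / (fact n * exp (z * of_real (ln (of_nat n))))) \<longlonglongrightarrow> 1"
proof -
  have G: "Gamma z \<noteq> 0" using assms by (simp add: Gamma_eq_zero_iff)
  have e: "Gamma (z + of_nat (Suc n)) / (fact n * exp (z * of_real (ln (of_nat n)))) = Gamma z * rGamma_series z n" for n
    using pochhammer_Gamma[OF assms, of "Suc n"] G unfolding rGamma_series_def by (simp add: field_simps)
  have E: "(\<lambda>n. Gamma (z + of_nat (Suc n)) / (fact n * exp (z * of_real (ln (of_nat n))))) = (\<lambda>n. Gamma z * rGamma_series z n)"
    by (rule ext, rule e)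
  have "(\<lambda>n. Gamma z * rGamma_series z n) \<longlonglongrightarrow> Gamma z * rGamma z"
    by (intro tendsto_intros)
  also have "Gamma z * rGamma z = 1" using G by (simp add: rGamma_inverse_Gamma)
  finally have L: "(\<lambda>n. Gamma z * rGamma_series z n) \<longlonglongrightarrow> 1" .
  show ?thesis unfolding E by (rule L)
qed

lemma Gamma_ratio_tendsto_1:
  assumes w: "Re w > - 1 / 2"
  shows "(\<lambda>N. (cmod (Gamma (of_real (1 + real N) + w)))\<^sup>2 / (Gamma (1 + real N) * Gamma (1 + real N + 2 * Re w))) \<longlonglongrightarrow> 1"
proof -
  have z1: "(1 + w) \<notin> \<int>\<^sub>\<le>\<^sub>0" by (rule Re_pos_not_nonpos_Ints) (use w in simp)
  have z3: "(1 + 2 * Re w) \<notin> \<int>\<^sub>\<le>\<^sub>0" by (rule pos_real_not_nonpos_Ints) (use w in simp)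
  have z2: "(1::real) \<notin> \<int>\<^sub>\<le>\<^sub>0" by (rule pos_real_not_nonpos_Ints) simp
  define E1 where "E1 = (\<lambda>n. Gamma ((1 + w) + of_nat (Suc n)) / (fact n * exp ((1 + w) * of_real (ln (of_nat n)))))"
  define E2 where "E2 = (\<lambda>n. Gamma ((1::real) + of_nat (Suc n)) / (fact n * exp (1 * of_real (ln (of_nat n)))))"
  define E3 where "E3 = (\<lambda>n. Gamma ((1 + 2 * Re w) + of_nat (Suc n)) / (fact n * exp ((1 + 2 * Re w) * of_real (ln (of_nat n)))))"
  have l1: "E1 \<longlonglongrightarrow> 1" unfolding E1_def by (rule Gamma_shift_asymptotic[OF z1])
  have l2: "E2 \<longlonglongrightarrow> 1" unfolding E2_def by (rule Gamma_shift_asymptotic[OF z2])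
  have l3: "E3 \<longlonglongrightarrow> 1" unfolding E3_def by (rule Gamma_shift_asymptotic[OF z3])
  have lim: "(\<lambda>n. (cmod (E1 n))\<^sup>2 / (E2 n * E3 n)) \<longlonglongrightarrow> (cmod 1)\<^sup>2 / (1 * 1)"
    by (intro tendsto_intros l1 l2 l3) simp
  have eq: "(cmod (E1 n))\<^sup>2 / (E2 n * E3 n) =
     (cmod (Gamma (of_real (1 + real (Suc n)) + w)))\<^sup>2 / (Gamma (1 + real (Suc n)) * Gamma (1 + real (Suc n) + 2 * Re w))" for n
  proof -
    define g1 where "g1 = cmod (Gamma ((1 + w) + of_nat (Suc n)))"
    define g2 where "g2 = Gamma ((1::real) + of_nat (Suc n))"
    define g3 where "g3 = Gamma ((1 + 2 * Re w) + of_nat (Suc n))"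
    define F where "F = (fact n :: real)"
    define e1 where "e1 = exp ((1 + Re w) * ln (real n))"
    define e2 where "e2 = exp (ln (real n))"
    define e3 where "e3 = exp ((1 + 2 * Re w) * ln (real n))"
    have a1: "cmod (E1 n) = g1 / (F * e1)"
      unfolding E1_def g1_def F_def e1_def by (simp add: norm_divide norm_mult)
    have a2: "E2 n = g2 / (F * e2)" unfolding E2_def g2_def F_def e2_def by simp
    have a3: "E3 n = g3 / (F * e3)" unfolding E3_def g3_def F_def e3_def by simp
    have ex: "e1 * e1 = e2 * e3" unfolding e1_def e2_def e3_def by (simp add: mult_exp_exp algebra_simps)
    have F: "F > 0" unfolding F_def by simp
    have g2: "g2 > 0" unfolding g2_def by (rule Gamma_real_pos) simp
    have g3: "g3 > 0" unfolding g3_def by (rule Gamma_real_pos) (use w in simp)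
    have e1: "e1 > 0" "e2 > 0" "e3 > 0" unfolding e1_def e2_def e3_def by simp_all
    have "(cmod (E1 n))\<^sup>2 / (E2 n * E3 n) = (g1 * g1) * (F * F * (e2 * e3)) / ((F * F * (e1 * e1)) * (g2 * g3))"
      unfolding a1 a2 a3 power2_eq_square using F g2 g3 e1 by (simp add: field_simps)
    also have "\<dots> = g1\<^sup>2 / (g2 * g3)"
      unfolding ex power2_eq_square using F g2 g3 e1 by (simp add: field_simps)
    also have "g1 = cmod (Gamma (of_real (1 + real (Suc n)) + w))"
      unfolding g1_def by (simp add: algebra_simps)
    also have "g2 = Gamma (1 + real (Suc n))" unfolding g2_def by simp
    also have "g3 = Gamma (1 + real (Suc n) + 2 * Re w)" unfolding g3_def by (simp add: algebra_simps)
    finally show ?thesis .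
  qed
  have "(\<lambda>n. (cmod (Gamma (of_real (1 + real (Suc n)) + w)))\<^sup>2 / (Gamma (1 + real (Suc n)) * Gamma (1 + real (Suc n) + 2 * Re w))) \<longlonglongrightarrow> 1"
    using lim unfolding eq by simp
  then show ?thesis by (rule LIMSEQ_imp_Suc)
qed

lemma newton_poly_norm_sq_sum:
  assumes w: "Re w > - 1 / 2"
  shows "summable (\<lambda>n. (cmod (newton_poly n w))\<^sup>2)"
    and "(\<Sum>n. (cmod (newton_poly n w))\<^sup>2) = Gamma (1 + 2 * Re w) / (cmod (Gamma (1 + w)))\<^sup>2"
proof -
  have e: "(\<lambda>n. (cmod (newton_poly n w))\<^sup>2) = gauss_term w 1" by (rule ext) (rule norm_newton_poly_sq)
  show "summable (\<lambda>n. (cmod (newton_poly n w))\<^sup>2)" unfolding e by (rule summable_gauss_term[OF w]) simp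
  have "(\<lambda>N. gauss_ratio w (1 + real N)) \<longlonglongrightarrow> 1 * 1"
  proof -
    have "(\<lambda>N. gauss_sum w (1 + real N) * ((cmod (Gamma (of_real (1 + real N) + w)))\<^sup>2 / (Gamma (1 + real N) * Gamma (1 + real N + 2 * Re w))))
            \<longlonglongrightarrow> 1 * 1"
      by (intro tendsto_mult gauss_sum_tendsto_1[OF w] Gamma_ratio_tendsto_1[OF w])
    then show ?thesis unfolding gauss_ratio_def by (simp add: algebra_simps)
  qed
  then have "(\<lambda>N. gauss_ratio w 1) \<longlonglongrightarrow> 1" unfolding gauss_ratio_plus_nat[OF w] by simp
  then have P1: "gauss_ratio w 1 = 1" by (simp add: LIMSEQ_const_iff)
  have G: "cmod (Gamma (1 + w)) > 0"
    using Gamma_nonzero_Re_pos[of "1 + w"] w by simp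
  have "gauss_sum w 1 * (cmod (Gamma (1 + w)))\<^sup>2 / Gamma (1 + 2 * Re w) = 1"
    using P1 unfolding gauss_ratio_def by (simp only: of_real_1 Gamma_1 mult_1)
  moreover have Gp: "Gamma (1 + 2 * Re w) > 0" by (rule Gamma_real_pos) (use w in simp)
  ultimately have "gauss_sum w 1 * (cmod (Gamma (1 + w)))\<^sup>2 = Gamma (1 + 2 * Re w)"
    by (simp add: divide_eq_eq)
  then have "gauss_sum w 1 = Gamma (1 + 2 * Re w) / (cmod (Gamma (1 + w)))\<^sup>2"
    using G by (simp add: eq_divide_eq)
  then show "(\<Sum>n. (cmod (newton_poly n w))\<^sup>2) = Gamma (1 + 2 * Re w) / (cmod (Gamma (1 + w)))\<^sup>2"
    unfolding e gauss_sum_def by simp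
qed

lemma Gamma_binomial_series:
  fixes b q :: real
  assumes b: "b > 0" and q: "0 \<le> q" "q < 1"
  shows "(\<lambda>m. Gamma (real m + b) / fact m * q ^ m) sums (Gamma b * (1 - q) powr (- b))"
proof -
  have "(\<lambda>n. ((- b) gchoose n) * (- q) ^ n) sums (1 + (- q)) powr (- b)"
    by (rule gen_binomial_real) (use q in simp)
  moreover have "((- b) gchoose n) * (- q) ^ n = Gamma (real n + b) / fact n * q ^ n / Gamma b" for n
  proof -
    have bn: "b \<notin> \<int>\<^sub>\<le>\<^sub>0" using b by (auto elim!: nonpos_Ints_cases)
    have "((- b) gchoose n) * (- q) ^ n = ((-1) ^ n * (-1) ^ n) * pochhammer b n / fact n * q ^ n"
      by (simp add: gbinomial_pochhammer power_minus[of q] mult_ac)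
    also have "(-1::real) ^ n * (-1) ^ n = 1" by (simp flip: power_add)
    also have "pochhammer b n = Gamma (b + real n) / Gamma b" using pochhammer_Gamma[OF bn] by simp
    finally show ?thesis by (simp add: add.commute)
  qed
  ultimately have "(\<lambda>n. Gamma (real n + b) / fact n * q ^ n / Gamma b) sums (1 - q) powr (- b)" by simp
  then have "(\<lambda>n. Gamma b * (Gamma (real n + b) / fact n * q ^ n / Gamma b)) sums (Gamma b * (1 - q) powr (- b))"
    by (rule sums_mult)
  moreover have "Gamma b \<noteq> 0" using Gamma_real_pos[OF b] by simp
  ultimately show ?thesis by simp
qed

lemma logistic_power_log_ratio:
  fixes s t r :: real
  assumes s: "s > 0" and t: "t > 0"
  shows "logistic_power r (- (ln s - ln t)) = exp (r * ln s + r * ln t - 2 * r * ln (s + t))"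
proof -
  have e: "exp (- (ln s - ln t)) = t / s" using s t by (simp add: exp_diff)
  have l: "ln (1 + t / s) = ln (s + t) - ln s"
  proof -
    have "1 + t / s = (s + t) / s" using s by (simp add: field_simps)
    then show ?thesis using s t by (simp add: ln_div)
  qed
  have "logistic_power r (- (ln s - ln t)) = exp (r * (- (ln s - ln t))) * exp (- 2 * r * ln (1 + t / s))"
  proof -
    have "0 < 1 + t / s" using s t by (intro add_pos_pos) auto
    then show ?thesis unfolding logistic_power_def e by (simp add: powr_def)
  qed
  also have "\<dots> = exp (r * ln s + r * ln t - 2 * r * ln (s + t))"
    unfolding l mult_exp_exp by (simp add: algebra_simps)
  finally show ?thesis .
qed

definition newton_line_term :: "real \<Rightarrow> real \<Rightarrow> real \<Rightarrow> nat \<Rightarrow> real" where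
  "newton_line_term s t \<rho> m = exp ((real m - 1) / 2 * (ln s + ln t)) * Gamma (2 * ((real m - 1) / 2 + \<rho> + 1)) *
       logistic_power ((real m - 1) / 2 + \<rho> + 1) (- (ln s - ln t)) / fact m"

lemma newton_line_term_eq:
  fixes s t \<rho> :: real
  assumes s: "s > 0" and t: "t > 0"
  shows "newton_line_term s t \<rho> m = exp (\<rho> * (ln s + ln t) - (2 * \<rho> + 1) * ln (s + t)) *
           (Gamma (real m + (2 * \<rho> + 1)) / fact m * (s * t / (s + t)) ^ m)"
proof -
  define r where "r = (real m - 1) / 2 + \<rho> + 1"
  have "(s * t / (s + t)) ^ m = exp (real m * (ln s + ln t - ln (s + t)))"
    using s t by (simp add: exp_of_nat_mult exp_diff exp_add)
  moreover have "2 * r = real m + (2 * \<rho> + 1)" by (simp add: r_def field_simps)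
  moreover have "(real m - 1) / 2 * (ln s + ln t) + (r * ln s + r * ln t - 2 * r * ln (s + t)) =
      (\<rho> * (ln s + ln t) - (2 * \<rho> + 1) * ln (s + t)) + real m * (ln s + ln t - ln (s + t))"
    by (simp add: r_def field_simps)
  ultimately show ?thesis
    unfolding newton_line_term_def r_def[symmetric] logistic_power_log_ratio[OF s t]
    by (simp add: exp_add[symmetric] mult_exp_exp)
qed

lemma newton_line_term_sums:
  fixes s t \<rho> :: real
  assumes s: "0 < s" "s < 1" and t: "0 < t" "t < 1" and \<rho>: "\<rho> > - 1 / 2"
  shows "(\<lambda>m. newton_line_term s t \<rho> m / Gamma (2 * \<rho> + 1)) sums
           (exp (\<rho> * (ln s + ln t)) / (s + t - s * t) powr (2 * \<rho> + 1))"
proof -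
  define b where "b = 2 * \<rho> + 1"
  have b: "b > 0" "Gamma b > 0" using \<rho> by (simp_all add: b_def Gamma_real_pos)
  have "s * t < s * 1" using s t by (intro mult_strict_left_mono) auto
  then have "s * t < s + t" using t by linarith
  then have st: "0 \<le> s * t / (s + t)" "s * t / (s + t) < 1" "s + t - s * t > 0"
    using s t by simp_all
  have "(\<lambda>m. exp (\<rho> * (ln s + ln t) - b * ln (s + t)) * (Gamma (real m + b) / fact m * (s * t / (s + t)) ^ m) / Gamma b)
      sums (exp (\<rho> * (ln s + ln t) - b * ln (s + t)) * (Gamma b * (1 - s * t / (s + t)) powr (- b)) / Gamma b)"
    by (intro sums_divide sums_mult Gamma_binomial_series b st)
  moreover have "1 - s * t / (s + t) = (s + t - s * t) / (s + t)"
    using s t by (simp add: field_simps)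
  ultimately show ?thesis
    using b(2)[unfolded b_def] st s t
    by (simp add: newton_line_term_eq b_def powr_def ln_div exp_diff exp_minus field_simps)
qed

lemma newton_kernel_norm_sq:
  assumes w: "Re w > - 1 / 2"
  shows "(newton_kernel_norm w)\<^sup>2 * (cmod (Gamma (w + 1)))\<^sup>2 = Gamma (2 * Re w + 1)"
proof -
  have G: "cmod (Gamma (w + 1)) > 0"
    using Gamma_nonzero_Re_pos[of "w + 1"] w by simp
  have "(newton_kernel_norm w)\<^sup>2 = (\<Sum>n. (cmod (newton_poly n w))\<^sup>2)"
    unfolding newton_kernel_norm_def
    by (intro real_sqrt_pow2 suminf_nonneg newton_poly_norm_sq_sum(1)[OF w]) simp
  also have "\<dots> = Gamma (2 * Re w + 1) / (cmod (Gamma (w + 1)))\<^sup>2"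
    using newton_poly_norm_sq_sum(2)[OF w] by (simp add: add.commute)
  finally show ?thesis using G by simp
qed

lemma newton_kernel_norm_pos:
  assumes "Re w > - 1 / 2"
  shows "newton_kernel_norm w > 0"
proof -
  have "Gamma (2 * Re w + 1) > 0" using assms by (intro Gamma_real_pos) simp
  then have "newton_kernel_norm w \<noteq> 0" using newton_kernel_norm_sq[OF assms] by auto
  moreover have "newton_kernel_norm w \<ge> 0"
    unfolding newton_kernel_norm_def using suminf_nonneg[OF newton_poly_norm_sq_sum(1)[OF assms]] by simp
  ultimately show ?thesis by simp
qed

lemma rpow_mult_rpow_cnj:
  "rpow s z * rpow t (cnj z) = of_real (exp (Re z * (ln s + ln t))) * exp (\<i> * of_real ((ln s - ln t) * Im z))"
proof -
  have "rpow s z * rpow t (cnj z) = exp (z * of_real (ln s) + cnj z * of_real (ln t))"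
    unfolding rpow_def by (simp add: exp_add)
  also have "z * of_real (ln s) + cnj z * of_real (ln t) =
      of_real (Re z * (ln s + ln t)) + \<i> * of_real ((ln s - ln t) * Im z)"
    by (simp add: complex_eq_iff algebra_simps)
  finally show ?thesis by (simp only: exp_add exp_of_real)
qed

lemma newton_kernel_integrand:
  fixes s t :: real and w z :: complex
  assumes w: "Re w > - 1 / 2" and gz: "Gamma (z + 1) \<noteq> 0"
  defines "k \<equiv> newton_kernel_normalized w"
  shows "(cmod (Gamma (z + 1)))\<^sup>2 *\<^sub>R (T_pow s k z * cnj (T_pow t k z)) =
     of_real (exp (Re z * (ln s + ln t)) * (cmod (Gamma (z + cnj w + 1)))\<^sup>2 / Gamma (2 * Re w + 1))
       * exp (\<i> * of_real ((ln s - ln t) * Im z))"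
proof -
  define Nn where "Nn = newton_kernel_norm w"
  have Nn: "Nn > 0" unfolding Nn_def using w by (rule newton_kernel_norm_pos)
  have gw: "cmod (Gamma (cnj w + 1)) = cmod (Gamma (w + 1))"
    by (metis cnj_Gamma complex_cnj_add complex_cnj_one complex_mod_cnj)
  have gw': "cmod (Gamma (w + 1)) > 0" using Gamma_nonzero_Re_pos[of "w + 1"] w by simp
  have e1: "T_pow s k z * cnj (T_pow t k z) = (rpow s z * rpow t (cnj z)) * of_real ((cmod (k z))\<^sup>2)"
    unfolding T_pow_def rpow_def complex_norm_square by (simp add: exp_cnj mult_ac)
  have "cmod (Gamma (z + 1)) * cmod (k z) = cmod (Gamma (z + cnj w + 1)) / (cmod (Gamma (w + 1)) * Nn)"
    unfolding k_def newton_kernel_normalized_def newton_kernel_def Nn_def gw[symmetric]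
    using Nn gz by (simp add: norm_divide norm_mult Nn_def)
  then have "(cmod (Gamma (z + 1)))\<^sup>2 * (cmod (k z))\<^sup>2 =
      (cmod (Gamma (z + cnj w + 1)))\<^sup>2 / (Nn\<^sup>2 * (cmod (Gamma (w + 1)))\<^sup>2)"
    by (simp add: power_mult_distrib[symmetric] power_divide mult_ac)
  then have e2: "(cmod (Gamma (z + 1)))\<^sup>2 * (cmod (k z))\<^sup>2 = (cmod (Gamma (z + cnj w + 1)))\<^sup>2 / Gamma (2 * Re w + 1)"
    unfolding Nn_def newton_kernel_norm_sq[OF w] .
  have "(cmod (Gamma (z + 1)))\<^sup>2 *\<^sub>R (T_pow s k z * cnj (T_pow t k z)) =
      (rpow s z * rpow t (cnj z)) * of_real ((cmod (Gamma (z + 1)))\<^sup>2 * (cmod (k z))\<^sup>2)"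
    unfolding e1 scaleR_conv_of_real by (simp add: mult_ac)
  then show ?thesis
    unfolding e2 rpow_mult_rpow_cnj by (simp add: mult_ac)
qed

lemma countable_nonpos_Ints: "countable (\<int>\<^sub>\<le>\<^sub>0 :: complex set)"
proof -
  have "countable (\<int> :: complex set)" unfolding Ints_def by (rule countable_image) simp
  then show ?thesis by (rule countable_subset[OF nonpos_Ints_subset_Ints])
qed

lemma borel_measurable_Gamma[measurable]: "(Gamma :: complex \<Rightarrow> complex) \<in> borel_measurable borel"
  by (rule borel_measurable_continuous_countable_exceptions[OF countable_nonpos_Ints])
     (rule continuous_on_Gamma, auto)

lemma borel_measurable_cnj[measurable (raw)]:
  "f \<in> borel_measurable M \<Longrightarrow> (\<lambda>x. cnj (f x :: complex)) \<in> borel_measurable M"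
  by (rule borel_measurable_continuous_on[where f=cnj]) (auto intro: continuous_intros)

lemma borel_measurable_Complex[measurable (raw)]:
  "f \<in> borel_measurable M \<Longrightarrow> g \<in> borel_measurable M \<Longrightarrow> (\<lambda>x. Complex (f x) (g x)) \<in> borel_measurable M"
proof -
  assume f: "f \<in> borel_measurable M" and g: "g \<in> borel_measurable M"
  have e: "(\<lambda>x. Complex (f x) (g x)) = (\<lambda>x. of_real (f x) + g x *\<^sub>R \<i>)" by (auto simp: complex_eq_iff)
  show ?thesis unfolding e using f g by measurable
qed

definition newton_line :: "nat \<Rightarrow> real \<Rightarrow> complex" where
  "newton_line m y = Complex ((real m - 1) / 2) y"

definition newton_density :: "nat \<Rightarrow> real \<Rightarrow> real" where
  "newton_density m y = (cmod (Gamma (newton_line m y + 1)))\<^sup>2 / (2 * pi * fact m)"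

lemma measurable_newton_line[measurable]:
  "(\<lambda>(m, y). newton_line m y) \<in> count_space UNIV \<Otimes>\<^sub>M lborel \<rightarrow>\<^sub>M borel"
  unfolding newton_line_def by measurable

lemma borel_measurable_newton_density[measurable]:
  "(\<lambda>(m, y). newton_density m y) \<in> borel_measurable (count_space UNIV \<Otimes>\<^sub>M lborel)"
proof -
  have "(\<lambda>p. fact (fst p) :: real) \<in> borel_measurable (count_space UNIV \<Otimes>\<^sub>M lborel)"
    by measurable
  then show ?thesis
    unfolding newton_density_def case_prod_beta' by measurable
qed

lemma integral_newton_mu:
  fixes f :: "complex \<Rightarrow> complex"
  assumes [measurable]: "f \<in> borel_measurable borel"
  shows "(\<integral>z. f z \<partial>newton_mu) =
    (\<integral>(m, y). newton_density m y *\<^sub>R f (newton_line m y) \<partial>(count_space UNIV \<Otimes>\<^sub>M lborel))"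
proof -
  define M where "M = count_space (UNIV :: nat set) \<Otimes>\<^sub>M (lborel :: real measure)"
  define D where "D = (\<lambda>(m, y). newton_density m y)"
  define L where "L = (\<lambda>(m, y). newton_line m y)"
  have [measurable]: "D \<in> borel_measurable M" "L \<in> M \<rightarrow>\<^sub>M borel"
    unfolding D_def L_def M_def by measurable
  have mu: "newton_mu = distr (density M (\<lambda>p. ennreal (D p))) borel L"
    unfolding newton_mu_def newton_density_def newton_line_def M_def D_def L_def
    by (simp add: prod.case_distrib)
  have "(\<integral>z. f z \<partial>newton_mu) = (\<integral>p. f (L p) \<partial>density M (\<lambda>p. ennreal (D p)))"
    unfolding mu by (rule integral_distr) simp_all
  also have "\<dots> = (\<integral>p. D p *\<^sub>R f (L p) \<partial>M)"
    by (rule integral_density)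
      (measurable, measurable, auto intro!: AE_I2 simp: D_def newton_density_def split: prod.split)
  finally show ?thesis
    unfolding M_def D_def L_def by (simp add: case_prod_beta')
qed

lemma sums_integral_count_space_lborel:
  fixes P :: "nat \<times> real \<Rightarrow> 'a::{banach, second_countable_topology}"
  assumes [measurable]: "P \<in> borel_measurable (count_space UNIV \<Otimes>\<^sub>M lborel)"
    and T: "\<And>m. has_bochner_integral lborel (\<lambda>y. P (m, y)) (T m)"
    and U: "\<And>m. has_bochner_integral lborel (\<lambda>y. norm (P (m, y))) (U m)"
    and "summable U"
  shows "T sums integral\<^sup>L (count_space UNIV \<Otimes>\<^sub>M lborel) P"
proof -
  interpret pair_sigma_finite "count_space (UNIV :: nat set)" "lborel :: real measure"
    by (rule pair_sigma_finite.intro[OF sigma_finite_measure_count_space lborel.sigma_finite_measure_axioms])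
  have IT: "(\<lambda>m. \<integral>y. P (m, y) \<partial>lborel) = T" and IU: "(\<lambda>m. \<integral>y. norm (P (m, y)) \<partial>lborel) = U"
    using T U by (auto simp: fun_eq_iff has_bochner_integral_integral_eq)
  have "U m \<ge> 0" for m
    using IU integral_nonneg_AE[of "\<lambda>y. norm (P (m, y))" lborel] by (auto simp: fun_eq_iff)
  then have intP: "integrable (count_space UNIV \<Otimes>\<^sub>M lborel) P"
    using T \<open>summable U\<close>
    by (intro Fubini_integrable) (auto simp: IU integrable_count_space_nat_iff intro: integrable.intros)
  have "integrable (count_space UNIV) T"
    using integrable_fst'[OF intP] by (simp add: IT)
  then have "T sums integral\<^sup>L (count_space UNIV) T"
    by (rule sums_integral_count_space_nat)
  then show ?thesis
    using integral_fst'[OF intP] by (simp add: IT)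
qed
lemma newton_kernel_integrand_line:
  fixes s t :: real and w :: complex
  assumes w: "Re w > - 1 / 2"
  defines "k \<equiv> newton_kernel_normalized w"
  shows "newton_density m y *\<^sub>R (T_pow s k (newton_line m y) * cnj (T_pow t k (newton_line m y))) =
    of_real (exp ((real m - 1) / 2 * (ln s + ln t)) / (2 * pi * fact m * Gamma (2 * Re w + 1))) *
    (of_real ((cmod (Gamma (Complex ((real m - 1) / 2 + Re w + 1) (y - Im w))))\<^sup>2) *
     exp (\<i> * of_real ((ln s - ln t) * y)))"
proof -
  define z where "z = newton_line m y"
  have "Re (z + 1) > 0" by (simp add: z_def newton_line_def field_simps)
  then have gz: "Gamma (z + 1) \<noteq> 0" by (rule Gamma_nonzero_Re_pos)
  have zw: "z + cnj w + 1 = Complex ((real m - 1) / 2 + Re w + 1) (y - Im w)"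
    by (simp add: complex_eq_iff z_def newton_line_def)
  have "newton_density m y *\<^sub>R (T_pow s k z * cnj (T_pow t k z)) =
      (1 / (2 * pi * fact m)) *\<^sub>R ((cmod (Gamma (z + 1)))\<^sup>2 *\<^sub>R (T_pow s k z * cnj (T_pow t k z)))"
    by (simp add: newton_density_def z_def)
  also have "\<dots> = (1 / (2 * pi * fact m)) *\<^sub>R (of_real (exp (Re z * (ln s + ln t)) *
      (cmod (Gamma (z + cnj w + 1)))\<^sup>2 / Gamma (2 * Re w + 1)) * exp (\<i> * of_real ((ln s - ln t) * Im z)))"
    unfolding k_def by (simp only: newton_kernel_integrand[OF w gz])
  finally show ?thesis
    unfolding z_def[symmetric] zw by (simp add: scaleR_conv_of_real z_def newton_line_def field_simps)
qed

text \<open>The second integral uses that the modulus of the integrand for \<open>(s, t)\<close> is the integrand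
  for \<open>s = t = sqrt (s * t)\<close>.\<close>

lemma newton_kernel_line_integral:
  fixes s t :: real and w :: complex
  assumes s: "0 < s" "s < 1" and t: "0 < t" "t < 1" and w: "Re w > - 1 / 2"
  defines "g \<equiv> \<lambda>z. T_pow s (newton_kernel_normalized w) z * cnj (T_pow t (newton_kernel_normalized w) z)"
  shows "has_bochner_integral lborel (\<lambda>y. newton_density m y *\<^sub>R g (newton_line m y))
           (exp (\<i> * of_real ((ln s - ln t) * Im w)) * of_real (newton_line_term s t (Re w) m / Gamma (2 * Re w + 1)))"
    and "has_bochner_integral lborel (\<lambda>y. norm (newton_density m y *\<^sub>R g (newton_line m y)))
           (newton_line_term (sqrt (s * t)) (sqrt (s * t)) (Re w) m / Gamma (2 * Re w + 1))"
proof -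
  define r where "r = (real m - 1) / 2 + Re w + 1"
  have r: "r > 0" unfolding r_def using w by (simp add: field_simps)
  define c where "c = exp ((real m - 1) / 2 * (ln s + ln t)) / (2 * pi * fact m * Gamma (2 * Re w + 1))"
  have "Gamma (2 * Re w + 1) > 0" using w by (intro Gamma_real_pos) simp
  then have c: "c > 0" unfolding c_def by simp
  have pt: "newton_density m y *\<^sub>R g (newton_line m y) =
      of_real c * (of_real ((cmod (Gamma (Complex r (y - Im w))))\<^sup>2) * exp (\<i> * of_real ((ln s - ln t) * y)))" for y
    unfolding g_def c_def r_def by (rule newton_kernel_integrand_line[OF w])
  have "has_bochner_integral lborel (\<lambda>y. of_real c * (of_real ((cmod (Gamma (Complex r (y - Im w))))\<^sup>2) *
      exp (\<i> * of_real ((ln s - ln t) * y))))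
      (of_real c * (exp (\<i> * of_real ((ln s - ln t) * Im w)) * of_real (2 * pi * Gamma (2 * r) * logistic_power r (- (ln s - ln t)))))"
    by (intro has_bochner_integral_mult_right fourier_Gamma_sq_shift r)
  then show "has_bochner_integral lborel (\<lambda>y. newton_density m y *\<^sub>R g (newton_line m y))
           (exp (\<i> * of_real ((ln s - ln t) * Im w)) * of_real (newton_line_term s t (Re w) m / Gamma (2 * Re w + 1)))"
    by (elim has_bochner_integral_rewrite)
       (simp_all add: pt c_def r_def newton_line_term_def field_simps)
  have ptn: "norm (newton_density m y *\<^sub>R g (newton_line m y)) = c * (cmod (Gamma (Complex r (y - Im w))))\<^sup>2" for y
    unfolding pt using c by (simp add: norm_mult norm_power)
  have "ln (sqrt (s * t)) + ln (sqrt (s * t)) = ln s + ln t"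
    using s t by (simp add: ln_sqrt ln_mult)
  moreover have "has_bochner_integral lborel (\<lambda>y. c * (cmod (Gamma (Complex r (y - Im w))))\<^sup>2)
      (c * (2 * pi * Gamma (2 * r) * logistic_power r 0))"
    by (intro has_bochner_integral_mult_right has_bochner_integral_Gamma_sq_shift r)
  ultimately have "has_bochner_integral lborel (\<lambda>y. c * (cmod (Gamma (Complex r (y - Im w))))\<^sup>2)
      (newton_line_term (sqrt (s * t)) (sqrt (s * t)) (Re w) m / Gamma (2 * Re w + 1))"
    by (elim has_bochner_integral_rewrite) (simp_all add: c_def r_def newton_line_term_def field_simps)
  then show "has_bochner_integral lborel (\<lambda>y. norm (newton_density m y *\<^sub>R g (newton_line m y)))
           (newton_line_term (sqrt (s * t)) (sqrt (s * t)) (Re w) m / Gamma (2 * Re w + 1))"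
    by (simp only: ptn)
qed

lemma sums_L2_inner_newton_kernel:
  fixes s t :: real and w :: complex
  assumes s: "0 < s" "s < 1" and t: "0 < t" "t < 1" and w: "Re w > - 1 / 2"
  shows "(\<lambda>m. exp (\<i> * of_real ((ln s - ln t) * Im w)) * of_real (newton_line_term s t (Re w) m / Gamma (2 * Re w + 1)))
           sums L2_inner newton_mu (T_pow s (newton_kernel_normalized w)) (T_pow t (newton_kernel_normalized w))"
proof -
  define g where "g = (\<lambda>z. T_pow s (newton_kernel_normalized w) z * cnj (T_pow t (newton_kernel_normalized w) z))"
  define U where "U = (\<lambda>m. newton_line_term (sqrt (s * t)) (sqrt (s * t)) (Re w) m / Gamma (2 * Re w + 1))"
  have [measurable]: "g \<in> borel_measurable borel"
    unfolding g_def T_pow_def rpow_def newton_kernel_normalized_def newton_kernel_def by measurable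
  have "0 < sqrt (s * t)" "sqrt (s * t) < 1"
    using s t mult_strict_mono[of s 1 t 1] by auto
  then have "summable U"
    unfolding U_def using w by (intro sums_summable[OF newton_line_term_sums]) simp_all
  moreover have "has_bochner_integral lborel (\<lambda>y. newton_density m y *\<^sub>R g (newton_line m y))
      (exp (\<i> * of_real ((ln s - ln t) * Im w)) * of_real (newton_line_term s t (Re w) m / Gamma (2 * Re w + 1)))"
    "has_bochner_integral lborel (\<lambda>y. norm (newton_density m y *\<^sub>R g (newton_line m y))) (U m)" for m
    using newton_kernel_line_integral[OF s t w] by (simp_all add: g_def U_def)
  ultimately have "(\<lambda>m. exp (\<i> * of_real ((ln s - ln t) * Im w)) * of_real (newton_line_term s t (Re w) m / Gamma (2 * Re w + 1)))
      sums (\<integral>(m, y). newton_density m y *\<^sub>R g (newton_line m y) \<partial>(count_space UNIV \<Otimes>\<^sub>M lborel))"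
    by (intro sums_integral_count_space_lborel[where U = U]) (simp_all add: case_prod_beta)
  then show ?thesis
    by (simp add: L2_inner_def integral_newton_mu g_def[symmetric])
qed

theorem mainTheorem2:
  fixes s t :: real and w :: complex
  assumes "0 < s" "s < 1" "0 < t" "t < 1" "Re w > -1/2"
  shows "L2_inner newton_mu (T_pow s (newton_kernel_normalized w))
                            (T_pow t (newton_kernel_normalized w))
         = rpow s w * rpow t (cnj w) / of_real ((s + t - s * t) powr (2 * Re w + 1))"
proof -
  have "(\<lambda>m. exp (\<i> * of_real ((ln s - ln t) * Im w)) * of_real (newton_line_term s t (Re w) m / Gamma (2 * Re w + 1)))
      sums (exp (\<i> * of_real ((ln s - ln t) * Im w)) *
            of_real (exp (Re w * (ln s + ln t)) / (s + t - s * t) powr (2 * Re w + 1)))"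
    using assms by (intro sums_mult sums_of_real newton_line_term_sums) simp_all
  with sums_L2_inner_newton_kernel[OF assms] show ?thesis
    by (simp add: sums_unique2 rpow_mult_rpow_cnj mult_ac)
qed

end
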